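(* Let $r\in C(0,1)$ be such that $\inf_{x\in[a,b]}r(x)>0$ for every $[a,b]\subset(0,1)$, and let $\gamma>1$, $\delta>0$. Then there exists a constant $\varkappa>0$ such that for every $q\in B_{r,\gamma,\delta}$, $$\int_0^1(q-\varkappa)\,y_{q,0}^2\,dx\ge0.$$
   Context: $A_{r,\gamma}=\{q\in L_{1,loc}(0,1): q\ge0,\ \int_0^1 rq^\gamma\,dx\le1\}$. For a nonnegative $q\in C(0,1)$ with compact support in $(0,1)$, $\lambda_0(q)$ is the smallest eigenvalue of $-y''+qy=\lambda y$, $y(0)=y(1)=0$, and $y_{q,0}$ is a corresponding real eigenfunction normalized by $\|y_{q,0}\|_{L_2[0,1]}=1$. $B_{r,\gamma,\delta}$ is the set of $q\in A_{r,\gamma}$ that are continuous on $(0,1)$ with compact support in $(0,1)$ and satisfy $\lambda_0(q)\ge\pi^2+\delta$. *)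

theory Defs
  imports "HOL-Analysis.Analysis"
begin

text \<open>Functions on (0,1) are modelled as real \<Rightarrow> real; values outside (0,1) are irrelevant.\<close>

definition in_A :: "(real \<Rightarrow> real) \<Rightarrow> real \<Rightarrow> (real \<Rightarrow> real) \<Rightarrow> bool" where
  "in_A r \<gamma> q \<longleftrightarrow>
     (\<forall>a b. 0 < a \<longrightarrow> a \<le> b \<longrightarrow> b < 1 \<longrightarrow> q integrable_on {a..b}) \<and>
     (\<forall>x\<in>{0<..<1}. q x \<ge> 0) \<and>
     (\<lambda>x. r x * q x powr \<gamma>) integrable_on {0..1} \<and>
     integral {0..1} (\<lambda>x. r x * q x powr \<gamma>) \<le> 1"

definition is_eigenfun :: "(real \<Rightarrow> real) \<Rightarrow> real \<Rightarrow> (real \<Rightarrow> real) \<Rightarrow> bool" where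
  "is_eigenfun q lam y \<longleftrightarrow>
     continuous_on {0..1} y \<and> y 0 = 0 \<and> y 1 = 0 \<and> (\<exists>x\<in>{0..1}. y x \<noteq> 0) \<and>
     (\<exists>y'. \<forall>x\<in>{0<..<1}. (y has_real_derivative y' x) (at x) \<and>
                         (y' has_real_derivative ((q x - lam) * y x)) (at x))"

definition lambda0 :: "(real \<Rightarrow> real) \<Rightarrow> real" where
  "lambda0 q = Inf {lam. \<exists>y. is_eigenfun q lam y}"

definition in_B :: "(real \<Rightarrow> real) \<Rightarrow> real \<Rightarrow> real \<Rightarrow> (real \<Rightarrow> real) \<Rightarrow> bool" where
  "in_B r \<gamma> \<delta> q \<longleftrightarrow>
     in_A r \<gamma> q \<and> continuous_on {0<..<1} q \<and>
     (\<exists>a b. 0 < a \<and> a \<le> b \<and> b < 1 \<and> (\<forall>x\<in>{0<..<1} - {a..b}. q x = 0)) \<and>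
     lambda0 q \<ge> pi^2 + \<delta>"

end

theory Submission
  imports Defs
begin

text \<open>Extend \<open>q\<close> by zero to a continuous potential \<open>p\<close> on \<open>[0, 1]\<close>. The ground state \<open>y\<close> has constant
  sign: solving \<open>u'' = (p - l) u\<close>, \<open>u 0 = 0\<close>, \<open>u' 0 = 1\<close> by Picard iteration and shooting in \<open>l\<close>
  gives an eigenvalue in \<open>[0, lambda0 q]\<close> with a positive eigenfunction; by minimality it is
  \<open>lambda0 q\<close>, and by the Wronskian \<open>y\<close> is a multiple of that eigenfunction.

  For the positive normalized ground state, Picone's identity with a fixed bump function bounds
  \<open>lambda0 q\<close> by the integral of \<open>q\<close> over \<open>[1/4, 3/4]\<close>, hence bounds \<open>y\<close> uniformly, so \<open>y\<close> keeps a
  fixed amount of mass away from the endpoints. Testing the equation against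
  \<open>sin (pi (x - \<eta>) / (1 - 2 \<eta>))\<close>, whose eigenvalue on \<open>[\<eta>, 1 - \<eta>]\<close> lies below \<open>lambda0 q - \<delta>/2\<close> for
  small \<open>\<eta>\<close>, bounds \<open>\<integral> q y sin\<close> from below, and AM-GM together with a bound on the integral of \<open>q\<close>
  over \<open>[\<eta>, 1 - \<eta>]\<close> turns this into \<open>\<integral> q y\<^sup>2 \<ge> \<kappa>\<close>. These integrals of \<open>q\<close> are bounded uniformly on
  \<open>A\<^sub>r\<^sub>,\<^sub>\<gamma>\<close> because \<open>q \<le> 1 + q powr \<gamma>\<close> and \<open>r\<close> is bounded below on compact subintervals.\<close>

section \<open>Elementary calculus on intervals\<close>

lemma integral_power_bound:
  fixes g :: "real \<Rightarrow> real"
  assumes x: "0 \<le> x" and gc: "continuous_on {0..x} g"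
    and bound: "\<And>t. t \<in> {0..x} \<Longrightarrow> \<bar>g t\<bar> \<le> A * t ^ n"
  shows "\<bar>integral {0..x} g\<bar> \<le> A * x ^ Suc n / Suc n"
proof -
  have "((\<lambda>t. t ^ n) has_integral (x ^ Suc n / Suc n - 0 ^ Suc n / Suc n)) {0..x}"
  proof (rule fundamental_theorem_of_calculus[OF x])
    fix t assume "t \<in> {0..x}"
    show "((\<lambda>t. t ^ Suc n / Suc n) has_vector_derivative t ^ n) (at t within {0..x})"
      unfolding has_real_derivative_iff_has_vector_derivative[symmetric]
      by (rule derivative_eq_intros refl | simp)+
  qed
  then have pow: "((\<lambda>t. A * t ^ n) has_integral A * (x ^ Suc n / Suc n)) {0..x}"
    by (intro has_integral_mult_right) simp
  have "\<bar>integral {0..x} g\<bar> \<le> integral {0..x} (\<lambda>t. A * t ^ n)"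
    unfolding real_norm_def[symmetric]
    by (rule integral_norm_bound_integral) (use gc pow bound integrable_continuous_real in auto)
  then show ?thesis using integral_unique[OF pow] by simp
qed

lemma le_if_deriv_nonneg:
  fixes f f' :: "real \<Rightarrow> real"
  assumes ab: "a \<le> b" and sub: "{a..b} \<subseteq> S"
    and deriv: "\<And>x. x \<in> S \<Longrightarrow> (f has_real_derivative f' x) (at x within S)"
    and nonneg: "\<And>x. x \<in> {a..b} \<Longrightarrow> 0 \<le> f' x"
  shows "f a \<le> f b"
proof -
  have "(f' has_integral (f b - f a)) {a..b}"
  proof (rule fundamental_theorem_of_calculus[OF ab])
    fix x assume "x \<in> {a..b}"
    from DERIV_subset[OF deriv[OF subsetD[OF sub this]] sub]
    show "(f has_vector_derivative f' x) (at x within {a..b})"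
      by (simp add: has_real_derivative_iff_has_vector_derivative)
  qed
  then have "0 \<le> f b - f a" by (rule has_integral_nonneg) (use nonneg in auto)
  then show ?thesis by simp
qed

lemma has_real_derivative_series_bounded:
  fixes f f' :: "nat \<Rightarrow> real \<Rightarrow> real"
  assumes "convex S" "c \<in> S" "summable (\<lambda>n. f n c)"
    and deriv: "\<And>n x. x \<in> S \<Longrightarrow> (f n has_real_derivative f' n x) (at x within S)"
    and bound: "\<And>n x. x \<in> S \<Longrightarrow> \<bar>f' n x\<bar> \<le> M n" and "summable M"
  shows "\<exists>g. \<forall>x\<in>S. (\<lambda>n. f n x) sums g x \<and> (g has_real_derivative (\<Sum>n. f' n x)) (at x within S)"
proof (rule has_field_derivative_series[OF \<open>convex S\<close> deriv _ \<open>c \<in> S\<close> \<open>summable (\<lambda>n. f n c)\<close>])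
  show "uniform_limit S (\<lambda>n x. \<Sum>i<n. f' i x) (\<lambda>x. \<Sum>n. f' n x) sequentially"
    by (rule Weierstrass_m_test[OF _ \<open>summable M\<close>]) (simp add: bound)
qed

section \<open>The initial value problem \<open>u'' = p u\<close>, \<open>u 0 = 0\<close>, \<open>u' 0 = 1\<close>\<close>

definition ivp_solution :: "(real \<Rightarrow> real) \<Rightarrow> (real \<Rightarrow> real) \<Rightarrow> (real \<Rightarrow> real) \<Rightarrow> bool" where
  "ivp_solution p u u' \<longleftrightarrow> u 0 = 0 \<and> u' 0 = 1 \<and>
     (\<forall>x\<in>{0..1}. (u has_real_derivative u' x) (at x within {0..1}) \<and>
                 (u' has_real_derivative p x * u x) (at x within {0..1}))"

lemma ivp_solutionD:
  assumes "ivp_solution p u u'" "x \<in> {0..1}"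
  shows "(u has_real_derivative u' x) (at x within {0..1})"
    and "(u' has_real_derivative p x * u x) (at x within {0..1})"
  using assms unfolding ivp_solution_def by auto

lemma ivp_solution_continuous:
  assumes "ivp_solution p u u'"
  shows "continuous_on {0..1} u" "continuous_on {0..1} u'"
  by (rule DERIV_continuous_on, erule ivp_solutionD[OF assms])+

text \<open>The solution is the series \<open>\<Sum>n. picard_term p n\<close> of Picard iterates of
  \<open>u x = x + \<integral>\<^sub>0\<^sup>x \<integral>\<^sub>0\<^sup>s p u\<close>; \<open>picard_term' p n\<close> is the derivative of the \<open>n\<close>-th term.\<close>

fun picard_term :: "(real \<Rightarrow> real) \<Rightarrow> nat \<Rightarrow> real \<Rightarrow> real" where
  "picard_term p 0 = (\<lambda>x. x)"
| "picard_term p (Suc n) = (\<lambda>x. integral {0..x} (\<lambda>s. integral {0..s} (\<lambda>t. p t * picard_term p n t)))"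

definition picard_term' :: "(real \<Rightarrow> real) \<Rightarrow> nat \<Rightarrow> real \<Rightarrow> real" where
  "picard_term' p n = (case n of 0 \<Rightarrow> (\<lambda>_. 1) | Suc m \<Rightarrow> (\<lambda>s. integral {0..s} (\<lambda>t. p t * picard_term p m t)))"

lemma picard_term_Suc': "picard_term p (Suc n) x = integral {0..x} (picard_term' p (Suc n))"
  by (simp add: picard_term'_def)

context
  fixes p :: "real \<Rightarrow> real" and P :: real
  assumes pc: "continuous_on {0..1} p" and P_bound: "\<forall>x\<in>{0..1}. \<bar>p x\<bar> \<le> P"
begin

lemma p_le: "x \<in> {0..1} \<Longrightarrow> \<bar>p x\<bar> \<le> P"
  using P_bound by blast

lemma picard_term'_Suc:
  assumes Vc: "continuous_on {0..1} (picard_term p n)"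
    and Vb: "\<forall>t\<in>{0..1}. \<bar>picard_term p n t\<bar> \<le> P ^ n * t ^ n / fact n"
    and x: "x \<in> {0..1}"
  shows "(picard_term' p (Suc n) has_real_derivative p x * picard_term p n x) (at x within {0..1})"
    and "\<bar>picard_term' p (Suc n) x\<bar> \<le> P ^ Suc n * x ^ Suc n / fact (Suc n)"
proof -
  have c: "continuous_on {0..1} (\<lambda>t. p t * picard_term p n t)" by (intro continuous_intros pc Vc)
  show "(picard_term' p (Suc n) has_real_derivative p x * picard_term p n x) (at x within {0..1})"
    unfolding picard_term'_def using integral_has_real_derivative[OF c x] by simp
  have P0: "0 \<le> P" using p_le[of 0] by auto
  have "\<bar>integral {0..x} (\<lambda>t. p t * picard_term p n t)\<bar> \<le> P ^ Suc n / fact n * x ^ Suc n / Suc n"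
  proof (rule integral_power_bound)
    show "continuous_on {0..x} (\<lambda>t. p t * picard_term p n t)"
      by (rule continuous_on_subset[OF c]) (use x in auto)
    fix t assume "t \<in> {0..x}"
    then have t: "t \<in> {0..1}" using x by auto
    have "\<bar>picard_term p n t\<bar> \<le> P ^ n * t ^ n / fact n" using Vb t by blast
    then have "\<bar>p t * picard_term p n t\<bar> \<le> P * (P ^ n * t ^ n / fact n)"
      unfolding abs_mult by (rule mult_mono[OF p_le[OF t]]) (use P0 in auto)
    then show "\<bar>p t * picard_term p n t\<bar> \<le> P ^ Suc n / fact n * t ^ n" by simp
  qed (use x in auto)
  also have "\<dots> = P ^ Suc n * x ^ Suc n / fact (Suc n)"
    by (simp add: field_simps)
  finally show "\<bar>picard_term' p (Suc n) x\<bar> \<le> P ^ Suc n * x ^ Suc n / fact (Suc n)"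
    by (simp add: picard_term'_def)
qed

lemma picard_term_continuous_bound:
  "continuous_on {0..1} (picard_term p n) \<and>
   (\<forall>x\<in>{0..1}. \<bar>picard_term p n x\<bar> \<le> P ^ n * x ^ n / fact n)"
proof (induction n)
  case 0
  then show ?case by (auto intro: continuous_intros)
next
  case (Suc n)
  note W = picard_term'_Suc[OF Suc[THEN conjunct1] Suc[THEN conjunct2]]
  have Wc: "continuous_on {0..1} (picard_term' p (Suc n))"
    by (rule DERIV_continuous_on[OF W(1)])
  have dV: "(picard_term p (Suc n) has_real_derivative picard_term' p (Suc n) x) (at x within {0..1})"
    if "x \<in> {0..1}" for x
    unfolding picard_term_Suc'[abs_def] by (rule integral_has_real_derivative[OF Wc that])
  have bV: "\<bar>picard_term p (Suc n) x\<bar> \<le> P ^ Suc n * x ^ Suc n / fact (Suc n)"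
    if x: "x \<in> {0..1}" for x
  proof -
    have "\<bar>picard_term p (Suc n) x\<bar> \<le> P ^ Suc n / fact (Suc n) * x ^ Suc (Suc n) / Suc (Suc n)"
      unfolding picard_term_Suc'
    proof (rule integral_power_bound)
      show "continuous_on {0..x} (picard_term' p (Suc n))"
        by (rule continuous_on_subset[OF Wc]) (use x in auto)
      fix t assume "t \<in> {0..x}"
      then have "t \<in> {0..1}" using x by auto
      from W(2)[OF this]
      show "\<bar>picard_term' p (Suc n) t\<bar> \<le> P ^ Suc n / fact (Suc n) * t ^ Suc n" by simp
    qed (use x in auto)
    also have "\<dots> \<le> P ^ Suc n / fact (Suc n) * x ^ Suc n"
    proof -
      have "x ^ Suc (Suc n) / Suc (Suc n) \<le> x ^ Suc (Suc n)"
        by (rule order.trans[OF divide_left_mono[of 1]]) (use x in auto)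
      also have "\<dots> \<le> x ^ Suc n"
        using x by (intro power_decreasing) auto
      finally have "x ^ Suc (Suc n) / Suc (Suc n) \<le> x ^ Suc n" .
      moreover have "0 \<le> P ^ Suc n / fact (Suc n)" using p_le[of 0] by auto
      ultimately have "P ^ Suc n / fact (Suc n) * (x ^ Suc (Suc n) / Suc (Suc n))
          \<le> P ^ Suc n / fact (Suc n) * x ^ Suc n"
        by (rule mult_left_mono)
      then show ?thesis by simp
    qed
    finally show ?thesis by simp
  qed
  show ?case
    using DERIV_continuous_on[OF dV] bV by simp
qed

lemma picard_term'_Suc_has_derivative:
  "x \<in> {0..1} \<Longrightarrow>
     (picard_term' p (Suc n) has_real_derivative p x * picard_term p n x) (at x within {0..1})"
  using picard_term'_Suc(1)[OF picard_term_continuous_bound[THEN conjunct1] picard_term_continuous_bound[THEN conjunct2]] .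

lemma picard_term_has_derivative:
  assumes x: "x \<in> {0..1}"
  shows "(picard_term p n has_real_derivative picard_term' p n x) (at x within {0..1})"
proof (cases n)
  case 0
  then show ?thesis by (auto simp: picard_term'_def intro!: derivative_eq_intros)
next
  case (Suc m)
  have "continuous_on {0..1} (picard_term' p (Suc m))"
    by (rule DERIV_continuous_on[OF picard_term'_Suc_has_derivative])
  from integral_has_real_derivative[OF this x] show ?thesis
    unfolding Suc picard_term_Suc'[abs_def] .
qed

lemma picard_term_abs_le:
  assumes x: "x \<in> {0..1}"
  shows "\<bar>picard_term p n x\<bar> \<le> P ^ n / fact n"
proof -
  have "\<bar>picard_term p n x\<bar> \<le> P ^ n * x ^ n / fact n" using picard_term_continuous_bound x by blast
  also have "\<dots> \<le> P ^ n * 1 / fact n"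
    using x p_le[of 0] by (intro divide_right_mono mult_left_mono power_le_one) auto
  finally show ?thesis by simp
qed

lemma picard_term'_abs_le:
  assumes x: "x \<in> {0..1}"
  shows "\<bar>picard_term' p n x\<bar> \<le> P ^ n / fact n"
proof (cases n)
  case 0
  then show ?thesis by (simp add: picard_term'_def)
next
  case (Suc m)
  have "\<bar>picard_term' p (Suc m) x\<bar> \<le> P ^ Suc m * x ^ Suc m / fact (Suc m)"
    using picard_term'_Suc(2)[OF picard_term_continuous_bound[THEN conjunct1] picard_term_continuous_bound[THEN conjunct2] x] .
  also have "\<dots> \<le> P ^ Suc m * 1 / fact (Suc m)"
    using x p_le[of 0] by (intro divide_right_mono mult_left_mono power_le_one) auto
  finally show ?thesis by (simp add: Suc)
qed

lemma picard_series_solution: "\<exists>u u'. ivp_solution p u u'"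
proof -
  have pV_bound: "\<bar>p x * picard_term p n x\<bar> \<le> P * (P ^ n / fact n)" if x: "x \<in> {0..1}" for n x
    unfolding abs_mult
    by (rule mult_mono[OF p_le[OF x] picard_term_abs_le[OF x]]) (use p_le[of 0] in auto)
  have summable: "summable (\<lambda>n. P ^ n / fact n)"
    using summable_exp[of P] by (simp add: field_simps)
  have V0: "picard_term p n 0 = 0" for n by (cases n) auto
  have W0: "picard_term' p (Suc n) 0 = 0" for n by (simp add: picard_term'_def)
  have "\<exists>u. \<forall>x\<in>{0..1}. (\<lambda>n. picard_term p n x) sums u x \<and>
      (u has_real_derivative (\<Sum>n. picard_term' p n x)) (at x within {0..1})"
    by (rule has_real_derivative_series_bounded[OF convex_real_interval(5) _ _ picard_term_has_derivative picard_term'_abs_le summable, where c=0])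
       (simp_all add: V0)
  then obtain u where u: "\<forall>x\<in>{0..1}. (\<lambda>n. picard_term p n x) sums u x \<and>
      (u has_real_derivative (\<Sum>n. picard_term' p n x)) (at x within {0..1})"
    by blast
  have "\<exists>v. \<forall>x\<in>{0..1}. (\<lambda>n. picard_term' p (Suc n) x) sums v x \<and>
      (v has_real_derivative (\<Sum>n. p x * picard_term p n x)) (at x within {0..1})"
    by (rule has_real_derivative_series_bounded[OF convex_real_interval(5) _ _ picard_term'_Suc_has_derivative pV_bound
          summable_mult[OF summable], where c=0])
       (simp_all add: W0)
  then obtain v where v: "\<forall>x\<in>{0..1}. (\<lambda>n. picard_term' p (Suc n) x) sums v x \<and>
      (v has_real_derivative (\<Sum>n. p x * picard_term p n x)) (at x within {0..1})"
    by blast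
  have u'_sum: "(\<Sum>n. picard_term' p n x) = 1 + v x" if x: "x \<in> {0..1}" for x
  proof -
    have "(\<lambda>n. picard_term' p n x) sums (v x + picard_term' p 0 x)"
      using v x sums_Suc_iff by blast
    then show ?thesis by (simp add: sums_iff picard_term'_def)
  qed
  have pu_sum: "(\<Sum>n. p x * picard_term p n x) = p x * u x" if x: "x \<in> {0..1}" for x
    using sums_mult[of "\<lambda>n. picard_term p n x" "u x" "p x"] u x by (simp add: sums_iff)
  have "ivp_solution p u (\<lambda>x. 1 + v x)"
    unfolding ivp_solution_def
  proof (intro conjI ballI)
    have "(\<lambda>n. picard_term p n 0) sums u 0" using u by auto
    then show "u 0 = 0" by (simp add: V0 sums_iff)
    have "(\<lambda>n. picard_term' p (Suc n) 0) sums v 0" using v by auto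
    then show "1 + v 0 = 1" by (simp add: W0 sums_iff)
    fix x :: real assume x: "x \<in> {0..1}"
    show "(u has_real_derivative 1 + v x) (at x within {0..1})"
      using bspec[OF u x] u'_sum[OF x] by simp
    show "((\<lambda>x. 1 + v x) has_real_derivative p x * u x) (at x within {0..1})"
      using bspec[OF v x] pu_sum[OF x] by (auto intro!: derivative_eq_intros)
  qed
  then show ?thesis by blast
qed

end

lemma ivp_solution_exists:
  assumes pc: "continuous_on {0..1} p"
  obtains u u' where "ivp_solution p u u'"
proof -
  obtain P where "\<forall>x\<in>{0..1}. \<bar>p x\<bar> \<le> P"
    using compact_imp_bounded[OF compact_continuous_image[OF pc compact_Icc]]
    unfolding bounded_iff by force
  then show ?thesis using picard_series_solution[OF pc] that by blast
qed

lemma gronwall_le: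
  fixes E E' :: "real \<Rightarrow> real"
  assumes d: "\<And>x. x\<in>{0..1} \<Longrightarrow> (E has_real_derivative E' x) (at x within {0..1})"
    and le: "\<And>x. x\<in>{0..1} \<Longrightarrow> E' x \<le> C * E x + K" and C: "0 \<le> C" and K: "0 \<le> K"
    and E0: "0 \<le> E 0" and x: "x \<in> {0..1}"
  shows "E x \<le> (E 0 + K) * exp C"
proof -
  define F where "F t = E 0 + K * t - exp (- C * t) * E t" for t
  have dF: "(F has_real_derivative (K - (exp (- C * t) * (- C) * E t + exp (- C * t) * E' t))) (at t within {0..1})"
    if "t \<in> {0..1}" for t
    unfolding F_def by (rule derivative_eq_intros refl d[OF that] | simp)+
  have "F 0 \<le> F x"
  proof (rule le_if_deriv_nonneg[OF _ _ dF])
    fix t assume t: "t \<in> {0..x}"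
    then have t1: "t \<in> {0..1}" using x by auto
    have "exp (- C * t) * (E' t - C * E t) \<le> exp (- C * t) * K"
      by (rule mult_left_mono) (use le[OF t1] in auto)
    also have "\<dots> \<le> 1 * K" by (rule mult_right_mono) (use C t K in auto)
    finally show "0 \<le> K - (exp (- C * t) * (- C) * E t + exp (- C * t) * E' t)"
      by (simp add: algebra_simps)
  qed (use x in auto)
  then have "exp (- C * x) * E x \<le> E 0 + K * x" by (simp add: F_def)
  also have "\<dots> \<le> E 0 + K" using x K by (simp add: mult_left_le)
  finally have h: "exp (- C * x) * E x \<le> E 0 + K" .
  have "E x = exp (C * x) * (exp (- C * x) * E x)" by (simp add: exp_minus field_simps)
  also have "\<dots> \<le> exp (C * x) * (E 0 + K)" by (rule mult_left_mono[OF h]) simp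
  also have "\<dots> \<le> exp C * (E 0 + K)"
    by (rule mult_right_mono) (use x C E0 K in \<open>auto simp: mult_left_le\<close>)
  finally show ?thesis by (simp add: mult.commute)
qed

lemma gronwall_ge:
  fixes E E' :: "real \<Rightarrow> real"
  assumes d: "\<And>x. x\<in>{0..1} \<Longrightarrow> (E has_real_derivative E' x) (at x within {0..1})"
    and le: "\<And>x. x\<in>{0..1} \<Longrightarrow> - C * E x \<le> E' x" and x: "x \<in> {0..1}"
  shows "E 0 \<le> exp (C * x) * E x"
proof -
  define F where "F t = exp (C * t) * E t" for t
  have dF: "(F has_real_derivative (exp (C * t) * C * E t + exp (C * t) * E' t)) (at t within {0..1})"
    if "t \<in> {0..1}" for t
    unfolding F_def by (rule derivative_eq_intros refl d[OF that] | simp)+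
  have "F 0 \<le> F x"
  proof (rule le_if_deriv_nonneg[OF _ _ dF])
    fix t assume t: "t \<in> {0..x}"
    then have t1: "t \<in> {0..1}" using x by auto
    have "0 \<le> exp (C * t) * (C * E t + E' t)"
      by (rule mult_nonneg_nonneg) (use le[OF t1] in auto)
    then show "0 \<le> exp (C * t) * C * E t + exp (C * t) * E' t" by (simp add: algebra_simps)
  qed (use x in auto)
  then show ?thesis by (simp add: F_def)
qed

lemma ivp_energy_has_derivative:
  fixes p u u' :: "real \<Rightarrow> real"
  assumes s: "ivp_solution p u u'" and x: "x \<in> {0..1}"
  shows "((\<lambda>t. (u t)^2 + (u' t)^2) has_real_derivative 2 * u x * u' x * (1 + p x)) (at x within {0..1})"
proof -
  have "((\<lambda>t. (u t)^2 + (u' t)^2) has_real_derivative (2 * u x * u' x + 2 * u' x * (p x * u x))) (at x within {0..1})"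
    by (rule derivative_eq_intros ivp_solutionD[OF s x] refl | simp)+
  then show ?thesis by (simp add: algebra_simps)
qed

lemma abs_two_mult_le: "\<bar>2 * a * b\<bar> \<le> a^2 + (b::real)^2"
proof -
  have "0 \<le> (\<bar>a\<bar> - \<bar>b\<bar>)^2" by simp
  then show ?thesis by (simp add: power2_eq_square algebra_simps abs_mult)
qed

lemma ivp_energy_le:
  fixes p u u' :: "real \<Rightarrow> real"
  assumes s: "ivp_solution p u u'" and P: "\<And>x. x \<in> {0..1} \<Longrightarrow> \<bar>p x\<bar> \<le> P" and x: "x \<in> {0..1}"
  shows "(u x)^2 + (u' x)^2 \<le> exp (1 + P)"
proof -
  have P0: "0 \<le> P" using P[of 0] by auto
  have u0: "u 0 = 0" "u' 0 = 1" using s by (auto simp: ivp_solution_def)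
  have "(u x)^2 + (u' x)^2 \<le> ((u 0)^2 + (u' 0)^2 + 0) * exp (1 + P)"
  proof (rule gronwall_le[OF ivp_energy_has_derivative[OF s]])
    fix t :: real assume t: "t \<in> {0..1}"
    have "2 * u t * u' t * (1 + p t) \<le> \<bar>2 * u t * u' t\<bar> * \<bar>1 + p t\<bar>"
      by (metis abs_ge_self abs_mult)
    also have "\<dots> \<le> ((u t)^2 + (u' t)^2) * (1 + P)"
      by (rule mult_mono[OF abs_two_mult_le]) (use P[OF t] in auto)
    finally show "2 * u t * u' t * (1 + p t) \<le> (1 + P) * ((u t)^2 + (u' t)^2) + 0" by (simp add: mult.commute)
  qed (use P0 x in auto)
  then show ?thesis using u0 by simp
qed

lemma ivp_solution_no_double_zero:
  fixes p u u' :: "real \<Rightarrow> real"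
  assumes s: "ivp_solution p u u'" and P: "\<And>x. x \<in> {0..1} \<Longrightarrow> \<bar>p x\<bar> \<le> P" and x: "x \<in> {0..1}"
    and z: "u x = 0" "u' x = 0"
  shows False
proof -
  have u0: "u 0 = 0" "u' 0 = 1" using s by (auto simp: ivp_solution_def)
  have "(u 0)^2 + (u' 0)^2 \<le> exp ((1 + P) * x) * ((u x)^2 + (u' x)^2)"
  proof (rule gronwall_ge[OF ivp_energy_has_derivative[OF s]])
    fix t :: real assume t: "t \<in> {0..1}"
    have "- (\<bar>2 * u t * u' t\<bar> * \<bar>1 + p t\<bar>) \<le> 2 * u t * u' t * (1 + p t)"
      by (metis abs_ge_minus_self abs_mult minus_le_iff)
    moreover have "\<bar>2 * u t * u' t\<bar> * \<bar>1 + p t\<bar> \<le> ((u t)^2 + (u' t)^2) * (1 + P)"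
      by (rule mult_mono[OF abs_two_mult_le]) (use P[OF t] in auto)
    ultimately show "- (1 + P) * ((u t)^2 + (u' t)^2) \<le> 2 * u t * u' t * (1 + p t)" by (simp add: algebra_simps)
  qed (use x in auto)
  then show False using u0 z by simp
qed

lemma ivp_solution_lambda_dependence:
  fixes p0 u1 u1' u2 u2' :: "real \<Rightarrow> real"
  assumes s1: "ivp_solution (\<lambda>x. p0 x - l1) u1 u1'" and s2: "ivp_solution (\<lambda>x. p0 x - l2) u2 u2'"
   and P: "\<And>x. x\<in>{0..1} \<Longrightarrow> \<bar>p0 x - l1\<bar> \<le> P" and B: "\<And>x. x\<in>{0..1} \<Longrightarrow> (u2 x)^2 \<le> B"
   and x: "x\<in>{0..1}"
  shows "(u1 x - u2 x)^2 \<le> (l1 - l2)^2 * B * exp (2 + P)"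
proof -
  have P0: "0 \<le> P" using P[of 0] by auto
  have B0: "0 \<le> B" using B[of 0] by (meson atLeastAtMost_iff order_trans zero_le_one zero_le_power2 order_refl)
  define E where "E t = (u1 t - u2 t)^2 + (u1' t - u2' t)^2" for t
  define d where "d = l2 - l1"
  have dE: "(E has_real_derivative 2 * (u1 t - u2 t) * (u1' t - u2' t) +
       2 * (u1' t - u2' t) * ((p0 t - l1) * u1 t - (p0 t - l2) * u2 t)) (at t within {0..1})"
    if t: "t \<in> {0..1}" for t
  proof -
    note d1 = ivp_solutionD[OF s1 t] and d2 = ivp_solutionD[OF s2 t]
    show ?thesis unfolding E_def
      by (rule derivative_eq_intros d1 d2 refl | simp add: algebra_simps)+
  qed
  have "E x \<le> (E 0 + d^2 * B) * exp (2 + P)"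
  proof (rule gronwall_le[OF dE])
    fix t :: real assume t: "t \<in> {0..1}"
    let ?w = "u1 t - u2 t" and ?w' = "u1' t - u2' t"
    have eq: "(p0 t - l1) * u1 t - (p0 t - l2) * u2 t = (p0 t - l1) * ?w + d * u2 t"
      by (simp add: d_def algebra_simps)
    have a1: "2 * ?w * ?w' * (1 + (p0 t - l1)) \<le> (1 + P) * E t"
    proof -
      have "2 * ?w * ?w' * (1 + (p0 t - l1)) \<le> \<bar>2 * ?w * ?w'\<bar> * \<bar>1 + (p0 t - l1)\<bar>"
        by (metis abs_ge_self abs_mult)
      also have "\<dots> \<le> (?w^2 + ?w'^2) * (1 + P)"
        by (rule mult_mono[OF abs_two_mult_le]) (use P[OF t] in auto)
      finally show ?thesis by (simp add: E_def mult.commute)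
    qed
    have a2: "2 * ?w' * (d * u2 t) \<le> E t + d^2 * B"
    proof -
      have "2 * ?w' * (d * u2 t) \<le> \<bar>2 * ?w' * (d * u2 t)\<bar>" by simp
      also have "\<dots> \<le> ?w'^2 + (d * u2 t)^2" using abs_two_mult_le[of ?w' "d * u2 t"] by simp
      also have "(d * u2 t)^2 = d^2 * (u2 t)^2" by (simp add: power_mult_distrib)
      also have "d^2 * (u2 t)^2 \<le> d^2 * B" by (rule mult_left_mono[OF B[OF t]]) simp
      moreover have "0 \<le> ?w^2" by simp
      ultimately show ?thesis unfolding E_def by linarith
    qed
    show "2 * ?w * ?w' + 2 * ?w' * ((p0 t - l1) * u1 t - (p0 t - l2) * u2 t) \<le> (2 + P) * E t + d^2 * B"
      unfolding eq using a1 a2 by (simp add: algebra_simps)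
  qed (use P0 B0 x in \<open>auto simp: E_def\<close>)
  moreover have "E 0 = 0" using s1 s2 by (simp add: E_def ivp_solution_def)
  moreover have "(u1 x - u2 x)^2 \<le> E x" by (simp add: E_def)
  ultimately show ?thesis by (simp add: d_def power2_commute)
qed

lemma abs_le_if_square_le: "(a::real)^2 \<le> B \<Longrightarrow> 1 \<le> B \<Longrightarrow> \<bar>a\<bar> \<le> B"
proof -
  assume h: "a^2 \<le> B" "1 \<le> B"
  show ?thesis
  proof (cases "\<bar>a\<bar> \<le> 1")
    case True then show ?thesis using h by linarith
  next
    case False
    then have "1 * \<bar>a\<bar> \<le> \<bar>a\<bar> * \<bar>a\<bar>" by (intro mult_right_mono) auto
    also have "\<dots> = a^2" by (simp add: power2_eq_square abs_mult_self_eq)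
    finally show ?thesis using h by simp
  qed
qed

lemma ivp_solution_ge_near_0:
  fixes p u u' :: "real \<Rightarrow> real"
  assumes s: "ivp_solution p u u'" and P: "\<And>x. x \<in> {0..1} \<Longrightarrow> \<bar>p x\<bar> \<le> P"
    and x: "0 \<le> x" "x \<le> 1 / (2 * (P * exp (1 + P) + 1))"
  shows "x / 2 \<le> u x"
proof -
  define L where "L = P * exp (1 + P) + 1"
  have P0: "0 \<le> P" using P[of 0] by auto
  have L1: "1 \<le> L" using P0 by (simp add: L_def)
  have xL: "x \<le> 1 / (2 * L)" using x by (simp add: L_def)
  have x1: "x \<le> 1"
  proof -
    have "1 / (2 * L) \<le> 1" using L1 by (simp add: field_simps)
    then show ?thesis using xL by linarith
  qed
  have ub: "\<bar>u t\<bar> \<le> exp (1 + P)" if t: "t \<in> {0..1}" for t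
  proof (rule abs_le_if_square_le)
    show "(u t)^2 \<le> exp (1 + P)" using ivp_energy_le[OF s P t] by (smt (verit) zero_le_power2)
    show "1 \<le> exp (1 + P)" using P0 by simp
  qed
  have pu: "\<bar>p t * u t\<bar> \<le> L" if t: "t \<in> {0..1}" for t
  proof -
    have "\<bar>p t * u t\<bar> \<le> P * exp (1 + P)" unfolding abs_mult
      by (rule mult_mono) (use P[OF t] ub[OF t] P0 in auto)
    then show ?thesis by (simp add: L_def)
  qed
  have d1: "((\<lambda>t. u' t + L * t) has_real_derivative p t * u t + L) (at t within {0..1})" if t: "t \<in> {0..1}" for t
    by (rule derivative_eq_intros ivp_solutionD[OF s t] refl | simp)+
  have u'lb: "1 / 2 \<le> u' t" if t: "0 \<le> t" "t \<le> x" for t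
  proof -
    have "u' 0 + L * 0 \<le> u' t + L * t"
      by (rule le_if_deriv_nonneg[OF _ _ d1]) (use t x1 pu in \<open>auto simp: abs_le_iff\<close>, smt (verit) abs_le_iff atLeastAtMost_iff pu)
    then have "1 \<le> u' t + L * t" using s by (simp add: ivp_solution_def)
    moreover have "L * t \<le> 1 / 2"
    proof -
      have "t \<le> 1 / (2 * L)" using t xL by linarith
      then have "L * t \<le> L * (1 / (2 * L))" using L1 by (intro mult_left_mono) auto
      also have "\<dots> = 1 / 2" using L1 by (simp add: field_simps)
      finally show ?thesis .
    qed
    ultimately show ?thesis by linarith
  qed
  have d2: "((\<lambda>t. u t - t / 2) has_real_derivative u' t - 1 / 2) (at t within {0..1})" if t: "t \<in> {0..1}" for t
    by (rule derivative_eq_intros ivp_solutionD[OF s t] refl | simp)+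
  have "u 0 - 0 / 2 \<le> u x - x / 2"
    by (rule le_if_deriv_nonneg[OF _ _ d2]) (use x x1 u'lb in auto)
  then show ?thesis using s by (simp add: ivp_solution_def)
qed

lemma ivp_solution_pos:
  fixes p u u' :: "real \<Rightarrow> real"
  assumes s: "ivp_solution p u u'" and P: "\<And>x. x \<in> {0..1} \<Longrightarrow> \<bar>p x\<bar> \<le> P"
    and pn: "\<And>x. x \<in> {0..1} \<Longrightarrow> 0 \<le> p x" and x: "0 < x" "x \<le> 1"
  shows "0 < u x"
proof -
  define x1 where "x1 = 1 / (2 * (P * exp (1 + P) + 1))"
  have P0: "0 \<le> P" using P[of 0] by auto
  have PE: "0 \<le> P * exp (1 + P)" using P0 by simp
  have x1p: "0 < x1" unfolding x1_def using PE by simp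
  have x11: "x1 \<le> 1" unfolding x1_def using PE by (simp add: field_simps)
  have near: "t / 2 \<le> u t" if "0 \<le> t" "t \<le> x1" for t
    using ivp_solution_ge_near_0[OF s P] that by (simp add: x1_def)
  show ?thesis
  proof (cases "x \<le> x1")
    case True then show ?thesis using near[of x] x by simp
  next
    case False
    have dh: "((\<lambda>t. u t * u' t) has_real_derivative (u' t * u' t + u t * (p t * u t))) (at t within {0..1})"
      if t: "t \<in> {0..1}" for t
      by (rule derivative_eq_intros ivp_solutionD[OF s t] refl | simp)+
    have uu': "0 \<le> u t * u' t" if t: "0 \<le> t" "t \<le> 1" for t
    proof -
      have "u 0 * u' 0 \<le> u t * u' t"
      proof (rule le_if_deriv_nonneg[OF _ _ dh])
        fix r assume r: "r \<in> {0..t}"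
        have "0 \<le> p r * (u r * u r)" using pn[of r] r t by (subst mult_nonneg_nonneg) auto
        then show "0 \<le> u' r * u' r + u r * (p r * u r)" by (simp add: algebra_simps)
      qed (use t in auto)
      then show ?thesis using s by (simp add: ivp_solution_def)
    qed
    have dsq: "((\<lambda>t. (u t)^2) has_real_derivative 2 * u t * u' t) (at t within {0..1})" if t: "t \<in> {0..1}" for t
      by (rule derivative_eq_intros ivp_solutionD[OF s t] refl | simp)+
    have sqmono: "(u x1)^2 \<le> (u t)^2" if t: "x1 \<le> t" "t \<le> 1" for t
      by (rule le_if_deriv_nonneg[OF _ _ dsq]) (use t x1p uu' in auto)
    have ux1: "0 < u x1" using near[of x1] x1p by simp
    show ?thesis
    proof (rule ccontr)
      assume "\<not> 0 < u x"
      then have "u x \<le> 0" by simp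
      then obtain z where z: "x1 \<le> z" "z \<le> x" "u z = 0"
        using IVT2'[of u x 0 x1] False ux1 continuous_on_subset[OF ivp_solution_continuous(1)[OF s], of "{x1..x}"] x x1p
        by auto
      have "(u x1)^2 \<le> (u z)^2" by (rule sqmono) (use z x in auto)
      then show False using z ux1 by simp
    qed
  qed
qed

section \<open>The Dirichlet problem on \<open>(0, 1)\<close>\<close>

definition sl_solution :: "(real \<Rightarrow> real) \<Rightarrow> real \<Rightarrow> (real \<Rightarrow> real) \<Rightarrow> (real \<Rightarrow> real) \<Rightarrow> bool" where
  "sl_solution q l y y' \<longleftrightarrow>
     (\<forall>x\<in>{0<..<1}. (y has_real_derivative y' x) (at x) \<and> (y' has_real_derivative (q x - l) * y x) (at x))"

lemma is_eigenfun_iff: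
  "is_eigenfun q l y \<longleftrightarrow> continuous_on {0..1} y \<and> y 0 = 0 \<and> y 1 = 0 \<and> (\<exists>x\<in>{0..1}. y x \<noteq> 0) \<and>
     (\<exists>y'. sl_solution q l y y')"
  unfolding is_eigenfun_def sl_solution_def ..

lemma sl_solution_cong:
  "\<forall>x\<in>{0<..<1}. p x = q x \<Longrightarrow> sl_solution p l y y' \<longleftrightarrow> sl_solution q l y y'"
  unfolding sl_solution_def by auto

lemma sl_solution_scale:
  assumes "sl_solution q l y y'"
  shows "sl_solution q l (\<lambda>x. c * y x) (\<lambda>x. c * y' x)"
  using assms unfolding sl_solution_def by (auto intro!: derivative_eq_intros)

lemma exists_gt_if_second_deriv_pos:
  fixes z z' :: "real \<Rightarrow> real"
  assumes d: "0 < d" and dz: "\<And>t. t \<in> {x..<x + d} \<Longrightarrow> (z has_real_derivative z' t) (at t)"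
    and z'x: "z' x = 0" and dz': "(z' has_real_derivative c) (at x)" and c: "0 < c"
  shows "\<exists>h. 0 < h \<and> h < d \<and> z x < z (x + h)"
proof -
  obtain e where e: "0 < e" "\<And>h. 0 < h \<Longrightarrow> h < e \<Longrightarrow> z' x < z' (x + h)"
    using DERIV_pos_inc_right[OF dz' c] by blast
  define h where "h = min e d / 2"
  have h: "0 < h" "h < e" "h < d" using e d by (auto simp: h_def)
  have "\<exists>t. x < t \<and> t < x + h \<and> z (x + h) - z x = (x + h - x) * z' t"
    by (rule MVT2) (use h dz in auto)
  then obtain t where t: "x < t" "t < x + h" "z (x + h) - z x = (x + h - x) * z' t" by blast
  have "z' x < z' (x + (t - x))" by (rule e(2)) (use t h in auto)
  then have "0 < h * z' t" using z'x h by simp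
  then show ?thesis using t h by (intro exI[of _ h]) auto
qed

text \<open>A positive interior maximum of \<open>z\<close> would have \<open>z'' = (q - l) z > 0\<close> there.\<close>

lemma sl_solution_nonpos_if_negative:
  fixes q z z' :: "real \<Rightarrow> real"
  assumes qn: "\<forall>x\<in>{0<..<1}. 0 \<le> q x" and l: "l < 0"
    and zc: "continuous_on {0..1} z" and z01: "z 0 = 0" "z 1 = 0" and ode: "sl_solution q l z z'"
    and x: "x \<in> {0..1}"
  shows "z x \<le> 0"
proof (rule ccontr)
  assume "\<not> z x \<le> 0"
  obtain xm where xm: "xm \<in> {0..1}" "\<forall>y\<in>{0..1}. z y \<le> z xm"
    using continuous_attains_sup[OF compact_Icc _ zc] by auto
  have zxm: "0 < z xm" using xm(2) x \<open>\<not> z x \<le> 0\<close> by force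
  then have xmi: "0 < xm" "xm < 1" using xm z01 by (auto simp: order.order_iff_strict)
  define d where "d = min xm (1 - xm)"
  have d: "0 < d" using xmi by (simp add: d_def)
  have dz: "(z has_real_derivative z' t) (at t)" "(z' has_real_derivative (q t - l) * z t) (at t)"
    if "0 < t" "t < 1" for t
    using ode that unfolding sl_solution_def by auto
  have z'0: "z' xm = 0"
  proof (rule DERIV_local_max[OF dz(1)[OF xmi] d])
    show "\<forall>y. \<bar>xm - y\<bar> < d \<longrightarrow> z y \<le> z xm"
      using xm(2) by (auto simp: d_def abs_less_iff)
  qed
  have "0 \<le> q xm" using qn xmi by simp
  then have "0 < (q xm - l) * z xm" using l zxm by (intro mult_pos_pos) auto
  moreover have "(z has_real_derivative z' t) (at t)" if "t \<in> {xm..<xm + d}" for t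
    by (rule dz(1)) (use that xmi in \<open>auto simp: d_def\<close>)
  ultimately obtain h where h: "0 < h" "h < d" "z xm < z (xm + h)"
    using exists_gt_if_second_deriv_pos[OF d _ z'0 dz(2)[OF xmi]] by blast
  have "xm + h \<in> {0..1}" using h xmi by (simp add: d_def)
  then have "z (xm + h) \<le> z xm" using xm(2) by blast
  with h(3) show False by simp
qed

lemma eigenvalue_nonneg:
  fixes q z :: "real \<Rightarrow> real"
  assumes qn: "\<forall>x\<in>{0<..<1}. 0 \<le> q x" and e: "is_eigenfun q l z"
  shows "0 \<le> l"
proof (rule ccontr)
  assume "\<not> 0 \<le> l"
  then have l: "l < 0" by simp
  obtain z' x0 where zc: "continuous_on {0..1} z" and z01: "z 0 = 0" "z 1 = 0"
    and x0: "x0 \<in> {0..1}" "z x0 \<noteq> 0" and ode: "sl_solution q l z z'"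
    using e unfolding is_eigenfun_iff by blast
  have "z x0 \<le> 0" by (rule sl_solution_nonpos_if_negative[OF qn l zc z01 ode x0(1)])
  moreover have "(\<lambda>x. - 1 * z x) x0 \<le> 0"
  proof (rule sl_solution_nonpos_if_negative[OF qn l _ _ _ sl_solution_scale[OF ode] x0(1)])
    show "continuous_on {0..1} (\<lambda>x. - 1 * z x)" by (intro continuous_intros zc)
  qed (use z01 in simp_all)
  ultimately show False using x0(2) by simp
qed

lemma lambda0_le:
  fixes q z :: "real \<Rightarrow> real"
  assumes qn: "\<forall>x\<in>{0<..<1}. 0 \<le> q x" and e: "is_eigenfun q l z"
  shows "lambda0 q \<le> l"
  unfolding lambda0_def
proof (rule cInf_lower)
  show "l \<in> {lam. \<exists>y. is_eigenfun q lam y}" using e by blast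
  show "bdd_below {lam. \<exists>y. is_eigenfun q lam y}"
    unfolding bdd_below_def using eigenvalue_nonneg[OF qn] by blast
qed

lemma sl_solution_deriv_bounded:
  assumes pc: "continuous_on {0..1} p" and yc: "continuous_on {0..1} y" and ode: "sl_solution p l y y'"
  obtains K where "\<And>x. x \<in> {0<..<1} \<Longrightarrow> \<bar>y' x\<bar> \<le> K"
proof -
  have gc: "continuous_on {0..1} (\<lambda>x. (p x - l) * y x)" by (intro continuous_intros pc yc)
  obtain L where L: "\<And>x. x \<in> {0..1} \<Longrightarrow> \<bar>(p x - l) * y x\<bar> \<le> L"
    using compact_imp_bounded[OF compact_continuous_image[OF gc compact_Icc]]
    unfolding bounded_iff by force
  have dy': "(y' has_field_derivative (p x - l) * y x) (at x within {0<..<1})" if "x \<in> {0<..<1}" for x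
    using ode that unfolding sl_solution_def by (simp add: has_field_derivative_at_within)
  have "\<bar>y' x\<bar> \<le> \<bar>y' (1/2)\<bar> + L" if x: "x \<in> {0<..<1}" for x
  proof -
    have "norm (y' x - y' (1/2)) \<le> L * norm (x - 1/2)"
      by (rule field_differentiable_bound[OF convex_real_interval(8) dy']) (use L x in auto)
    moreover have "L * \<bar>x - 1/2\<bar> \<le> L * 1"
      using L[of 0] x by (intro mult_left_mono) (auto simp: abs_le_iff)
    ultimately show ?thesis by simp
  qed
  then show ?thesis using that by blast
qed

lemma eq_at_ends_if_eq_on_interior:
  fixes f g :: "real \<Rightarrow> real"
  assumes fc: "continuous_on {0..1} f" and gc: "continuous_on {0..1} g" and eq: "\<forall>x\<in>{0<..<1}. f x = g x"
  shows "f 0 = g 0" "f 1 = g 1"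
proof -
  have ev0: "eventually (\<lambda>x. f x = g x) (at_right 0)"
    using eventually_at_right_real[of 0 1] eq by (auto elim: eventually_mono)
  have ev1: "eventually (\<lambda>x. f x = g x) (at_left 1)"
    using eventually_at_left_real[of 0 1] eq by (auto elim: eventually_mono)
  have "(g \<longlongrightarrow> f 0) (at_right 0)"
    using Lim_transform_eventually[OF continuous_on_Icc_at_rightD[OF fc] ev0] by simp
  then show "f 0 = g 0" using tendsto_unique[OF trivial_limit_at_right_real continuous_on_Icc_at_rightD[OF gc]] by simp
  have "(g \<longlongrightarrow> f 1) (at_left 1)"
    using Lim_transform_eventually[OF continuous_on_Icc_at_leftD[OF fc] ev1] by simp
  then show "f 1 = g 1" using tendsto_unique[OF trivial_limit_at_left_real continuous_on_Icc_at_leftD[OF gc]] by simp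
qed

definition wronskian :: "(real \<Rightarrow> real) \<Rightarrow> (real \<Rightarrow> real) \<Rightarrow> (real \<Rightarrow> real) \<Rightarrow> (real \<Rightarrow> real) \<Rightarrow> real \<Rightarrow> real" where
  "wronskian y y' u u' x = y x * u' x - y' x * u x"

lemma wronskian_constant:
  assumes "sl_solution q l y y'" "sl_solution q l u u'"
  obtains c where "\<And>x. x \<in> {0<..<1} \<Longrightarrow> wronskian y y' u u' x = c"
proof -
  have "(wronskian y y' u u' has_real_derivative 0) (at x within {0<..<1})" if x: "x \<in> {0<..<1}" for x
  proof -
    have "(wronskian y y' u u' has_real_derivative
        y' x * u' x + y x * ((q x - l) * u x) - ((q x - l) * y x * u x + y' x * u' x)) (at x)"
      unfolding wronskian_def[abs_def] using assms x unfolding sl_solution_def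
      by (auto intro!: derivative_eq_intros)
    then show ?thesis by (simp add: algebra_simps has_field_derivative_at_within)
  qed
  then show ?thesis
    using has_field_derivative_zero_constant[OF convex_real_interval(8)] that by metis
qed

text \<open>Both solutions vanish at \<open>0\<close> with bounded derivatives, so their Wronskian tends to \<open>0\<close> there.\<close>

lemma wronskian_eq_0:
  assumes y: "sl_solution q l y y'" "continuous_on {0..1} y" "y 0 = 0" "\<forall>x\<in>{0<..<1}. \<bar>y' x\<bar> \<le> K1"
    and u: "sl_solution q l u u'" "continuous_on {0..1} u" "u 0 = 0" "\<forall>x\<in>{0<..<1}. \<bar>u' x\<bar> \<le> K2"
    and x: "x \<in> {0<..<1}"
  shows "wronskian y y' u u' x = 0"
proof -
  obtain c where c: "\<And>x. x \<in> {0<..<1} \<Longrightarrow> wronskian y y' u u' x = c"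
    using wronskian_constant[OF y(1) u(1)] by blast
  have ev: "eventually (\<lambda>x. x \<in> {0<..<1}) (at_right (0::real))"
    using eventually_at_right_real[OF zero_less_one] by simp
  have "(y \<longlongrightarrow> 0) (at_right 0)" "(u \<longlongrightarrow> 0) (at_right 0)"
    using continuous_on_Icc_at_rightD[OF y(2)] continuous_on_Icc_at_rightD[OF u(2)] y(3) u(3) by simp_all
  then have limg: "((\<lambda>x. \<bar>y x\<bar> * K2 + K1 * \<bar>u x\<bar>) \<longlongrightarrow> \<bar>0\<bar> * K2 + K1 * \<bar>0\<bar>) (at_right 0)"
    by (intro tendsto_intros)
  have lim0: "(wronskian y y' u u' \<longlongrightarrow> 0) (at_right 0)"
  proof (rule Lim_null_comparison)
    show "eventually (\<lambda>x. norm (wronskian y y' u u' x) \<le> \<bar>y x\<bar> * K2 + K1 * \<bar>u x\<bar>) (at_right 0)"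
      using ev
    proof (rule eventually_mono)
      fix x :: real assume x: "x \<in> {0<..<1}"
      have "norm (wronskian y y' u u' x) \<le> \<bar>y x * u' x\<bar> + \<bar>y' x * u x\<bar>"
        unfolding wronskian_def by simp
      also have "\<bar>y x * u' x\<bar> \<le> \<bar>y x\<bar> * K2"
        unfolding abs_mult by (rule mult_left_mono) (use u(4) x in auto)
      also have "\<bar>y' x * u x\<bar> \<le> K1 * \<bar>u x\<bar>"
        unfolding abs_mult by (rule mult_right_mono) (use y(4) x in auto)
      finally show "norm (wronskian y y' u u' x) \<le> \<bar>y x\<bar> * K2 + K1 * \<bar>u x\<bar>" by simp
    qed
    show "((\<lambda>x. \<bar>y x\<bar> * K2 + K1 * \<bar>u x\<bar>) \<longlongrightarrow> 0) (at_right 0)"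
      using limg by simp
  qed
  have "eventually (\<lambda>x. c = wronskian y y' u u' x) (at_right 0)"
    using ev by (rule eventually_mono) (simp add: c)
  then have "(wronskian y y' u u' \<longlongrightarrow> c) (at_right 0)"
    by (rule Lim_transform_eventually[OF tendsto_const])
  then have "c = 0" using tendsto_unique[OF trivial_limit_at_right_real _ lim0] by blast
  then show ?thesis using c[OF x] by simp
qed

lemma proportional_if_same_equation:
  assumes y: "sl_solution q l y y'" "continuous_on {0..1} y" "y 0 = 0" "\<forall>x\<in>{0<..<1}. \<bar>y' x\<bar> \<le> K1"
    and u: "sl_solution q l u u'" "continuous_on {0..1} u" "u 0 = 0" "\<forall>x\<in>{0<..<1}. \<bar>u' x\<bar> \<le> K2"
    and upos: "\<forall>x\<in>{0<..<1}. 0 < u x"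
  obtains c where "\<And>x. x \<in> {0<..<1} \<Longrightarrow> y x = c * u x"
proof -
  have "((\<lambda>t. y t / u t) has_real_derivative 0) (at x within {0<..<1})" if x: "x \<in> {0<..<1}" for x
  proof -
    have ux: "u x \<noteq> 0" using upos x by force
    have "((\<lambda>t. y t / u t) has_real_derivative (y' x * u x - y x * u' x) / (u x * u x)) (at x)"
      using y(1) u(1) x ux unfolding sl_solution_def
      by (auto intro!: derivative_eq_intros simp: power2_eq_square)
    moreover have "y' x * u x - y x * u' x = 0"
      using wronskian_eq_0[OF y u x] by (simp add: wronskian_def)
    ultimately show ?thesis by (simp add: has_field_derivative_at_within)
  qed
  then obtain c where "\<And>x. x \<in> {0<..<1} \<Longrightarrow> y x / u x = c"
    using has_field_derivative_zero_constant[OF convex_real_interval(8)] by metis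
  then have "\<And>x. x \<in> {0<..<1} \<Longrightarrow> y x = c * u x"
    using upos by (force simp: field_simps)
  then show ?thesis by (rule that)
qed

section \<open>Positivity of the ground state by shooting\<close>

lemma has_real_derivative_at_if_within_01:
  fixes f :: "real \<Rightarrow> real"
  assumes "x \<in> {0<..<1}" "(f has_real_derivative d) (at x within {0..1})"
  shows "(f has_real_derivative d) (at x)"
  using assms at_within_interior[of x "{0..1::real}"] by simp

lemma ivp_solution_sl_solution:
  assumes "ivp_solution (\<lambda>x. p x - l) u u'"
  shows "sl_solution p l u u'"
  unfolding sl_solution_def
proof
  fix x :: real assume x: "x \<in> {0<..<1}"
  then have "x \<in> {0..1}" by simp
  from has_real_derivative_at_if_within_01[OF x ivp_solutionD(1)[OF assms this]]
    has_real_derivative_at_if_within_01[OF x ivp_solutionD(2)[OF assms this]]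
  show "(u has_real_derivative u' x) (at x) \<and> (u' has_real_derivative (p x - l) * u x) (at x)" by simp
qed

lemma ivp_solution_family:
  assumes "continuous_on {0..1} p"
  obtains U U' where "\<And>l. ivp_solution (\<lambda>x. p x - l) (U l) (U' l)"
proof -
  have "\<forall>l. \<exists>u u'. ivp_solution (\<lambda>x. p x - l) u u'"
    using ivp_solution_exists[OF continuous_on_diff[OF assms continuous_on_const]] by metis
  then show ?thesis using that by metis
qed

lemma ivp_solution_nonneg_no_interior_zero:
  fixes U U' :: "real \<Rightarrow> real"
  assumes s: "ivp_solution p U U'" and P: "\<And>x. x \<in> {0..1} \<Longrightarrow> \<bar>p x\<bar> \<le> P"
    and nn: "\<forall>x\<in>{0<..<1}. 0 \<le> U x" and x: "x \<in> {0<..<1}" and z: "U x = 0"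
  shows False
proof -
  define d where "d = min x (1 - x)"
  have d: "0 < d" using x by (simp add: d_def)
  have dU: "DERIV U x :> U' x" using has_real_derivative_at_if_within_01[OF x ivp_solutionD(1)[OF s]] x by auto
  have "U' x = 0"
  proof (rule DERIV_local_min[OF dU d])
    show "\<forall>y. \<bar>x - y\<bar> < d \<longrightarrow> U x \<le> U y"
    proof (intro allI impI)
      fix y assume "\<bar>x - y\<bar> < d"
      then have "y \<in> {0<..<1}" unfolding d_def by (auto simp: abs_less_iff)
      then show "U x \<le> U y" using nn z by auto
    qed
  qed
  then show False using ivp_solution_no_double_zero[OF s P _ z] x by auto
qed

lemma Inf_image_attained:
  fixes g :: "'a::topological_space \<Rightarrow> real"
  assumes "compact S" "S \<noteq> {}" "continuous_on S g"
  shows "\<exists>x\<in>S. g x = Inf (g ` S)"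
proof -
  obtain x where x: "x \<in> S" "\<forall>t\<in>S. g x \<le> g t"
    using continuous_attains_inf[OF assms] by blast
  have "Inf (g ` S) = g x" by (rule cInf_eq_minimum) (use x in auto)
  then show ?thesis using x by auto
qed

lemma Inf_image_le:
  fixes g :: "'a::topological_space \<Rightarrow> real"
  assumes "compact S" "continuous_on S g" "x \<in> S"
  shows "Inf (g ` S) \<le> g x"
  using assms by (intro cInf_lower imageI bounded_imp_bdd_below compact_imp_bounded compact_continuous_image)

lemma continuous_on_Inf_image_family:
  fixes f :: "real \<Rightarrow> 'a::topological_space \<Rightarrow> real"
  assumes S: "compact S" "S \<noteq> {}" and fc: "\<And>l. l \<in> A \<Longrightarrow> continuous_on S (f l)" and K: "0 \<le> K"
    and lip: "\<And>l k x. l \<in> A \<Longrightarrow> k \<in> A \<Longrightarrow> x \<in> S \<Longrightarrow> \<bar>f l x - f k x\<bar> \<le> K * \<bar>l - k\<bar>"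
  shows "continuous_on A (\<lambda>l. Inf (f l ` S))"
proof -
  have le: "Inf (f l ` S) \<le> Inf (f k ` S) + K * \<bar>l - k\<bar>" if lk: "l \<in> A" "k \<in> A" for l k
  proof -
    obtain x where x: "x \<in> S" "f k x = Inf (f k ` S)"
      using Inf_image_attained[OF S fc[OF lk(2)]] by blast
    have "Inf (f l ` S) \<le> f l x" by (rule Inf_image_le[OF S(1) fc[OF lk(1)] x(1)])
    also have "\<dots> \<le> f k x + K * \<bar>l - k\<bar>" using lip[OF lk x(1)] by linarith
    finally show ?thesis using x(2) by simp
  qed
  have "dist (Inf (f l ` S)) (Inf (f k ` S)) \<le> K * dist l k" if "l \<in> A" "k \<in> A" for l k
    using le[OF that] le[OF that(2,1)]
    by (simp add: dist_real_def abs_minus_commute abs_le_iff)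
  then show ?thesis by (intro lipschitz_on_continuous_on[of K] lipschitz_onI K)
qed

lemma ivp_solution_lambda_lipschitz:
  fixes p0 :: "real \<Rightarrow> real" and U U' :: "real \<Rightarrow> real \<Rightarrow> real"
  assumes sols: "\<And>l. ivp_solution (\<lambda>x. p0 x - l) (U l) (U' l)"
    and P: "\<forall>x\<in>{0..1}. \<forall>l\<in>A. \<bar>p0 x - l\<bar> \<le> P"
    and lk: "l \<in> A" "k \<in> A" and x: "x \<in> {0..1}"
  shows "\<bar>U l x - U k x\<bar> \<le> sqrt (exp (1 + P) * exp (2 + P)) * \<bar>l - k\<bar>"
proof -
  have Pl: "\<And>t. t \<in> {0..1} \<Longrightarrow> \<bar>p0 t - l\<bar> \<le> P" and Pk: "\<And>t. t \<in> {0..1} \<Longrightarrow> \<bar>p0 t - k\<bar> \<le> P"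
    using P lk by auto
  have "(U k t)^2 \<le> exp (1 + P)" if "t \<in> {0..1}" for t
    using ivp_energy_le[OF sols Pk that] by (smt (verit) zero_le_power2)
  from ivp_solution_lambda_dependence[OF sols sols Pl this x]
  have "sqrt ((U l x - U k x)^2) \<le> sqrt ((l - k)^2 * (exp (1 + P) * exp (2 + P)))"
    by (intro real_sqrt_le_mono) (simp add: mult.assoc)
  then show ?thesis by (simp add: real_sqrt_mult mult.commute)
qed

text \<open>The shooting method: \<open>U l\<close> is positive on \<open>(0, 1]\<close> for \<open>l = 0\<close> but not for \<open>l = mu\<close>, and its
  minimum over \<open>[x\<^sub>1, 1]\<close> depends continuously on \<open>l\<close>, so it vanishes for some \<open>l\<close> in between; as \<open>U l\<close>
  stays positive near \<open>0\<close> and cannot touch zero in the interior, the zero sits at \<open>1\<close>.\<close>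

lemma shooting_min_zero:
  fixes p0 :: "real \<Rightarrow> real" and U U' :: "real \<Rightarrow> real \<Rightarrow> real"
  assumes sols: "\<And>l. ivp_solution (\<lambda>x. p0 x - l) (U l) (U' l)"
    and P: "\<forall>x\<in>{0..1}. \<forall>l\<in>{0..mu}. \<bar>p0 x - l\<bar> \<le> P"
    and p0n: "\<forall>x\<in>{0..1}. 0 \<le> p0 x" and mu0: "0 \<le> mu"
    and notpos: "\<not> (\<forall>x\<in>{0<..1}. 0 < U mu x)"
    and a: "0 < a" "a \<le> 1" and near: "\<And>l x. l \<in> {0..mu} \<Longrightarrow> 0 < x \<Longrightarrow> x \<le> a \<Longrightarrow> 0 < U l x"
  shows "\<exists>ls\<in>{0..mu}. (\<exists>x\<in>{a..1}. U ls x = 0) \<and> (\<forall>x\<in>{a..1}. 0 \<le> U ls x)"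
proof -
  define S where "S = {a..1}"
  have S: "compact S" "S \<noteq> {}" "S \<subseteq> {0..1}" using a by (auto simp: S_def)
  have Uc: "continuous_on S (U l)" for l
    using continuous_on_subset[OF ivp_solution_continuous(1)[OF sols] S(3)] .
  define m where "m l = Inf (U l ` S)" for l
  define K where "K = sqrt (exp (1 + P) * exp (2 + P))"
  have mc: "continuous_on {0..mu} m"
    unfolding m_def
  proof (rule continuous_on_Inf_image_family[OF S(1,2) Uc, where K=K])
    show "0 \<le> K" by (simp add: K_def)
    fix l k x assume "l \<in> {0..mu}" "k \<in> {0..mu}" "x \<in> S"
    then show "\<bar>U l x - U k x\<bar> \<le> K * \<bar>l - k\<bar>"
      unfolding K_def using ivp_solution_lambda_lipschitz[OF sols P] S(3) by blast
  qed
  have m0: "0 < m 0"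
  proof -
    obtain x where "x \<in> S" "U 0 x = m 0"
      using Inf_image_attained[OF S(1,2) Uc] unfolding m_def by blast
    moreover have "\<bar>p0 t - 0\<bar> \<le> P" if "t \<in> {0..1}" for t
      using bspec[OF bspec[OF P that], of 0] mu0 by simp
    then have "0 < U 0 x"
      by (rule ivp_solution_pos[OF sols]) (use p0n \<open>x \<in> S\<close> a in \<open>auto simp: S_def\<close>)
    ultimately show ?thesis by simp
  qed
  have "m mu \<le> 0"
  proof (rule ccontr)
    assume neg: "\<not> m mu \<le> 0"
    have "0 < U mu x" if x: "x \<in> {0<..1}" for x
    proof (cases "x \<le> a")
      case True then show ?thesis using near[of mu x] x mu0 by simp
    next
      case False
      then have "x \<in> S" using x by (simp add: S_def)
      from Inf_image_le[OF S(1) Uc this, of mu] show ?thesis using neg unfolding m_def by linarith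
    qed
    then show False using notpos by blast
  qed
  then obtain ls where ls: "ls \<in> {0..mu}" "m ls = 0"
    using IVT2'[of m mu 0 0] m0 mc mu0 by auto
  moreover have "\<exists>x\<in>S. U ls x = 0"
    using Inf_image_attained[OF S(1,2) Uc, of ls] ls(2) unfolding m_def by auto
  moreover have "0 \<le> U ls t" if "t \<in> S" for t
    using Inf_image_le[OF S(1) Uc that, of ls] ls(2) unfolding m_def by simp
  ultimately show ?thesis unfolding S_def by blast
qed

lemma shooting_eigenvalue:
  fixes p0 :: "real \<Rightarrow> real" and U U' :: "real \<Rightarrow> real \<Rightarrow> real"
  assumes sols: "\<And>l. ivp_solution (\<lambda>x. p0 x - l) (U l) (U' l)"
    and P: "\<forall>x\<in>{0..1}. \<forall>l\<in>{0..mu}. \<bar>p0 x - l\<bar> \<le> P"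
    and p0n: "\<forall>x\<in>{0..1}. 0 \<le> p0 x" and mu0: "0 \<le> mu"
    and notpos: "\<not> (\<forall>x\<in>{0<..1}. 0 < U mu x)"
  shows "\<exists>ls\<in>{0..mu}. U ls 1 = 0 \<and> (\<forall>x\<in>{0<..<1}. 0 < U ls x)"
proof -
  have Pl: "\<And>x. x \<in> {0..1} \<Longrightarrow> \<bar>p0 x - l\<bar> \<le> P" if "l \<in> {0..mu}" for l
    using P that by blast
  have P0: "0 \<le> P" using Pl[of 0 0] mu0 by auto
  define x1 where "x1 = 1 / (2 * (P * exp (1 + P) + 1))"
  have PE: "0 \<le> P * exp (1 + P)" using P0 by simp
  have x1: "0 < x1" "x1 \<le> 1" unfolding x1_def using PE by (simp_all add: field_simps)
  have near: "0 < U l x" if "l \<in> {0..mu}" "0 < x" "x \<le> x1" for l x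
    using ivp_solution_ge_near_0[OF sols Pl[OF that(1)], of x] that by (simp add: x1_def)
  obtain ls x0 where ls: "ls \<in> {0..mu}" and x0: "x0 \<in> {x1..1}" "U ls x0 = 0"
    and geS: "\<forall>x\<in>{x1..1}. 0 \<le> U ls x"
    using shooting_min_zero[OF sols P p0n mu0 notpos x1 near] by blast
  have nn: "\<forall>x\<in>{0<..<1}. 0 \<le> U ls x"
  proof
    fix x :: real assume x: "x \<in> {0<..<1}"
    show "0 \<le> U ls x"
    proof (cases "x \<le> x1")
      case True then show ?thesis using near[OF ls, of x] x by simp
    next
      case False then show ?thesis using geS x by simp
    qed
  qed
  have pos: "\<forall>x\<in>{0<..<1}. 0 < U ls x"
  proof
    fix x :: real assume x: "x \<in> {0<..<1}"
    have "0 \<le> U ls x" using nn x by blast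
    moreover have "U ls x \<noteq> 0" using ivp_solution_nonneg_no_interior_zero[OF sols Pl[OF ls] nn x] by blast
    ultimately show "0 < U ls x" by simp
  qed
  have "x0 = 1"
  proof (rule ccontr)
    assume "x0 \<noteq> 1"
    then have "x0 \<in> {0<..<1}" using x0(1) x1 by auto
    then show False using pos x0(2) by force
  qed
  then show ?thesis using ls x0(2) pos by blast
qed

lemma eigenfun_nonzero_interior:
  assumes "is_eigenfun q l y"
  shows "\<exists>x\<in>{0<..<1}. y x \<noteq> 0"
proof -
  obtain x where x: "x \<in> {0..1}" "y x \<noteq> 0" and "y 0 = 0" "y 1 = 0"
    using assms unfolding is_eigenfun_def by blast
  then have "x \<in> {0<..<1}" by (cases "x = 0"; cases "x = 1") auto
  then show ?thesis using x by blast
qed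

lemma proportional_to_positive_ivp_solution:
  assumes pc: "continuous_on {0..1} p"
    and yc: "continuous_on {0..1} y" and y0: "y 0 = 0" and ode: "sl_solution p l y y'"
    and sol: "ivp_solution (\<lambda>x. p x - l) u u'" and upos: "\<forall>x\<in>{0<..<1}. 0 < u x"
  obtains c where "\<And>x. x \<in> {0<..<1} \<Longrightarrow> y x = c * u x"
proof -
  obtain K1 where K1: "\<And>x. x \<in> {0<..<1} \<Longrightarrow> \<bar>y' x\<bar> \<le> K1"
    using sl_solution_deriv_bounded[OF pc yc ode] by blast
  obtain K2 where K2: "\<And>x. x \<in> {0..1} \<Longrightarrow> \<bar>u' x\<bar> \<le> K2"
    using compact_imp_bounded[OF compact_continuous_image[OF ivp_solution_continuous(2)[OF sol] compact_Icc]]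
    unfolding bounded_iff by force
  have K1': "\<forall>x\<in>{0<..<1}. \<bar>y' x\<bar> \<le> K1" and K2': "\<forall>x\<in>{0<..<1}. \<bar>u' x\<bar> \<le> K2"
    using K1 K2 by auto
  have u0: "u 0 = 0" using sol by (simp add: ivp_solution_def)
  show ?thesis
    using proportional_if_same_equation[OF ode yc y0 K1' ivp_solution_sl_solution[OF sol]
          ivp_solution_continuous(1)[OF sol] u0 K2' upos] that by blast
qed

lemma eigenfun_not_pos_up_to_1:
  assumes pc: "continuous_on {0..1} p" and yc: "continuous_on {0..1} y" and y01: "y 0 = 0" "y 1 = 0"
    and ode: "sl_solution p l y y'" and xn: "xn \<in> {0<..<1}" "y xn \<noteq> 0"
    and sol: "ivp_solution (\<lambda>x. p x - l) u u'"
  shows "\<not> (\<forall>x\<in>{0<..1}. 0 < u x)"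
proof
  assume pos: "\<forall>x\<in>{0<..1}. 0 < u x"
  then obtain c where c: "\<And>x. x \<in> {0<..<1} \<Longrightarrow> y x = c * u x"
    using proportional_to_positive_ivp_solution[OF pc yc y01(1) ode sol] by force
  have "y 1 = c * u 1"
    by (rule eq_at_ends_if_eq_on_interior(2)[OF yc _ ])
       (use c ivp_solution_continuous(1)[OF sol] in \<open>auto intro: continuous_intros\<close>)
  moreover have "0 < u 1" using pos by simp
  ultimately have "c = 0" using y01 by simp
  then show False using c xn by auto
qed

lemma ivp_solution_is_eigenfun:
  assumes sol: "ivp_solution (\<lambda>x. p x - l) u u'" and u1: "u 1 = 0" and upos: "\<forall>x\<in>{0<..<1}. 0 < u x"
    and pq: "\<forall>x\<in>{0<..<1}. p x = q x"
  shows "is_eigenfun q l u"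
  unfolding is_eigenfun_iff
proof (intro conjI)
  show "continuous_on {0..1} u" by (rule ivp_solution_continuous(1)[OF sol])
  show "u 0 = 0" using sol by (simp add: ivp_solution_def)
  show "u 1 = 0" by (rule u1)
  have "0 < u (1/2)" using upos by simp
  then show "\<exists>x\<in>{0..1}. u x \<noteq> 0" by (intro bexI[of _ "1/2"]) auto
  show "\<exists>y'. sl_solution q l u y'"
    using ivp_solution_sl_solution[OF sol] sl_solution_cong[OF pq] by blast
qed

lemma ground_state_sign:
  fixes p q y :: "real \<Rightarrow> real"
  assumes pc: "continuous_on {0..1} p" and pn: "\<forall>x\<in>{0..1}. 0 \<le> p x" and pq: "\<forall>x\<in>{0<..<1}. p x = q x"
    and e: "is_eigenfun q mu y" and mumin: "\<And>l z. is_eigenfun q l z \<Longrightarrow> mu \<le> l"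
  shows "\<exists>s. (s = 1 \<or> s = -1) \<and> (\<forall>x\<in>{0<..<1}. 0 < s * y x)"
proof -
  have qn: "\<forall>x\<in>{0<..<1}. 0 \<le> q x"
  proof
    fix x :: real assume x: "x \<in> {0<..<1}"
    then have "x \<in> {0..1}" by simp
    then have "0 \<le> p x" using pn by blast
    then show "0 \<le> q x" using pq x by simp
  qed
  have mu0: "0 \<le> mu" by (rule eigenvalue_nonneg[OF qn e])
  obtain y' where yc: "continuous_on {0..1} y" and y01: "y 0 = 0" "y 1 = 0"
    and ode: "sl_solution p mu y y'"
    using e sl_solution_cong[OF pq] unfolding is_eigenfun_iff by blast
  obtain xn where xn: "xn \<in> {0<..<1}" "y xn \<noteq> 0" using eigenfun_nonzero_interior[OF e] by blast
  obtain U U' where sols: "\<And>l. ivp_solution (\<lambda>x. p x - l) (U l) (U' l)"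
    using ivp_solution_family[OF pc] by blast
  obtain P where P: "\<And>x. x \<in> {0..1} \<Longrightarrow> \<bar>p x\<bar> \<le> P"
    using compact_imp_bounded[OF compact_continuous_image[OF pc compact_Icc]]
    unfolding bounded_iff by force
  have Pl: "\<forall>x\<in>{0..1}. \<forall>l\<in>{0..mu}. \<bar>p x - l\<bar> \<le> P + mu"
  proof (intro ballI)
    fix x l :: real assume "x \<in> {0..1}" "l \<in> {0..mu}"
    then show "\<bar>p x - l\<bar> \<le> P + mu" using P[of x] by auto
  qed
  obtain ls where ls: "ls \<in> {0..mu}" "U ls 1 = 0" "\<forall>x\<in>{0<..<1}. 0 < U ls x"
    using shooting_eigenvalue[OF sols Pl pn mu0 eigenfun_not_pos_up_to_1[OF pc yc y01 ode xn sols]]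
    by blast
  have "mu \<le> ls" by (rule mumin[OF ivp_solution_is_eigenfun[OF sols ls(2,3) pq]])
  then have "ls = mu" using ls(1) by simp
  then obtain c where c: "\<And>x. x \<in> {0<..<1} \<Longrightarrow> y x = c * U mu x"
    using proportional_to_positive_ivp_solution[OF pc yc y01(1) ode sols] ls(3) by blast
  have c0: "c \<noteq> 0" using c xn by auto
  show ?thesis
  proof (intro exI[of _ "sgn c"] conjI ballI)
    show "sgn c = 1 \<or> sgn c = -1" using c0 by (auto simp: sgn_if)
    fix x :: real assume x: "x \<in> {0<..<1}"
    have "sgn c * y x = \<bar>c\<bar> * U mu x" using c[OF x] by (simp add: abs_sgn mult.assoc[symmetric])
    then show "0 < sgn c * y x" using c0 ls(3) x \<open>ls = mu\<close> by simp
  qed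
qed

section \<open>Integral estimates for a positive ground state\<close>

lemma sl_solution_continuous_on:
  assumes "sl_solution p l y y'" "S \<subseteq> {0<..<1}"
  shows "continuous_on S y" "continuous_on S y'"
proof -
  have "isCont y x" "isCont y' x" if "x \<in> S" for x
    using assms that DERIV_isCont unfolding sl_solution_def by blast+
  then show "continuous_on S y" "continuous_on S y'"
    by (simp_all add: continuous_at_imp_continuous_on)
qed

lemma tendsto_0_if_abs_le_mult:
  fixes y h :: "real \<Rightarrow> real"
  assumes ly: "(y \<longlongrightarrow> 0) F" and ev: "eventually (\<lambda>x. \<bar>h x\<bar> \<le> \<bar>y x\<bar> * K) F"
  shows "(h \<longlongrightarrow> 0) F"
proof (rule Lim_null_comparison)
  show "eventually (\<lambda>x. norm (h x) \<le> \<bar>y x\<bar> * K) F" using ev by simp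
  have "((\<lambda>x. \<bar>y x\<bar> * K) \<longlongrightarrow> \<bar>0\<bar> * K) F" by (intro tendsto_intros ly)
  then show "((\<lambda>x. \<bar>y x\<bar> * K) \<longlongrightarrow> 0) F" by simp
qed

lemma sl_solution_energy_identity:
  fixes p0 y y' :: "real \<Rightarrow> real"
  assumes yc: "continuous_on {0..1} y" and y01: "y 0 = 0" "y 1 = 0"
    and ode: "sl_solution p0 mu y y'"
    and y'b: "\<forall>x\<in>{0<..<1}. \<bar>y' x\<bar> \<le> K"
  shows "((\<lambda>x. (y' x)^2 + (p0 x - mu) * (y x)^2) has_integral 0) {0..1}"
proof -
  note yd = ode[unfolded sl_solution_def]
  define h where "h x = (if x \<in> {0<..<1} then y x * y' x else 0)" for x
  have dh: "(h has_real_derivative (y' x)^2 + (p0 x - mu) * (y x)^2) (at x)" if x: "x \<in> {0<..<1}" for x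
  proof -
    have "((\<lambda>t. y t * y' t) has_real_derivative (y' x * y' x + y x * ((p0 x - mu) * y x))) (at x)"
      using yd x by (auto intro!: derivative_eq_intros)
    then have "((\<lambda>t. y t * y' t) has_real_derivative (y' x)^2 + (p0 x - mu) * (y x)^2) (at x)"
      by (simp add: power2_eq_square algebra_simps)
    then show ?thesis
      by (rule has_field_derivative_transform_within_open[where S="{0<..<1}"]) (use x in \<open>auto simp: h_def\<close>)
  qed
  have ev0: "eventually (\<lambda>x. \<bar>h x\<bar> \<le> \<bar>y x\<bar> * K) (at_right 0)"
    using eventually_at_right_real[OF zero_less_one]
  proof (rule eventually_mono)
    fix x :: real assume x: "x \<in> {0<..<1}"
    show "\<bar>h x\<bar> \<le> \<bar>y x\<bar> * K" using x y'b by (auto simp: h_def abs_mult intro: mult_left_mono)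
  qed
  have ev1: "eventually (\<lambda>x. \<bar>h x\<bar> \<le> \<bar>y x\<bar> * K) (at_left 1)"
    using eventually_at_left_real[OF zero_less_one]
  proof (rule eventually_mono)
    fix x :: real assume x: "x \<in> {0<..<1}"
    show "\<bar>h x\<bar> \<le> \<bar>y x\<bar> * K" using x y'b by (auto simp: h_def abs_mult intro: mult_left_mono)
  qed
  have hc: "continuous_on {0..1} h"
  proof (rule continuous_on_IccI)
    have h0: "h 0 = 0" by (simp add: h_def)
    have "(y \<longlongrightarrow> 0) (at_right 0)" using continuous_on_Icc_at_rightD[OF yc] y01 by simp
    from tendsto_0_if_abs_le_mult[OF this ev0] show "(h \<longlongrightarrow> h 0) (at_right 0)" by (simp only: h0)
    have h1: "h 1 = 0" by (simp add: h_def)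
    have "(y \<longlongrightarrow> 0) (at_left 1)" using continuous_on_Icc_at_leftD[OF yc] y01 by simp
    from tendsto_0_if_abs_le_mult[OF this ev1] show "(h \<longlongrightarrow> h 1) (at_left 1)" by (simp only: h1)
    fix x :: real assume "0 < x" "x < 1"
    then have "isCont h x" using dh[of x] DERIV_isCont by auto
    then show "h \<midarrow>x\<rightarrow> h x" by (simp add: isCont_def)
  qed simp
  have "((\<lambda>x. (y' x)^2 + (p0 x - mu) * (y x)^2) has_integral (h 1 - h 0)) {0..1}"
    by (rule fundamental_theorem_of_calculus_interior[OF _ hc])
       (use dh in \<open>auto simp: has_real_derivative_iff_has_vector_derivative[symmetric]\<close>)
  then show ?thesis by (simp add: h_def)
qed

lemma ground_state_deriv_sq_integral:
  fixes p0 y y' :: "real \<Rightarrow> real"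
  assumes pc: "continuous_on {0..1} p0" and p0n: "\<forall>x\<in>{0..1}. 0 \<le> p0 x"
    and yc: "continuous_on {0..1} y" and y01: "y 0 = 0" "y 1 = 0"
    and ode: "sl_solution p0 mu y y'" and y'b: "\<forall>x\<in>{0<..<1}. \<bar>y' x\<bar> \<le> K"
    and nrm: "integral {0..1} (\<lambda>x. (y x)^2) = 1"
  shows "(\<lambda>x. (y' x)^2) integrable_on {0..1}" "integral {0..1} (\<lambda>x. (y' x)^2) \<le> mu"
proof -
  have i1: "(\<lambda>x. (p0 x - mu) * (y x)^2) integrable_on {0..1}"
    by (intro integrable_continuous_real continuous_intros pc yc)
  have i2: "(\<lambda>x. p0 x * (y x)^2) integrable_on {0..1}"
    by (intro integrable_continuous_real continuous_intros pc yc)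
  have i3: "(\<lambda>x. (y x)^2) integrable_on {0..1}"
    by (intro integrable_continuous_real continuous_intros yc)
  have "((\<lambda>x. ((y' x)^2 + (p0 x - mu) * (y x)^2) - (p0 x - mu) * (y x)^2) has_integral
      (0 - integral {0..1} (\<lambda>x. (p0 x - mu) * (y x)^2))) {0..1}"
    by (rule has_integral_diff[OF sl_solution_energy_identity[OF yc y01 ode y'b] integrable_integral[OF i1]])
  then have H: "((\<lambda>x. (y' x)^2) has_integral (- integral {0..1} (\<lambda>x. (p0 x - mu) * (y x)^2))) {0..1}"
    by simp
  then show "(\<lambda>x. (y' x)^2) integrable_on {0..1}" by blast
  have "integral {0..1} (\<lambda>x. (p0 x - mu) * (y x)^2) = integral {0..1} (\<lambda>x. p0 x * (y x)^2 - mu * (y x)^2)"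
    by (simp add: algebra_simps)
  also have "\<dots> = integral {0..1} (\<lambda>x. p0 x * (y x)^2) - mu"
    using integral_diff[OF i2 integrable_on_cmult_left[OF i3, of mu]] nrm by simp
  finally have "integral {0..1} (\<lambda>x. (y' x)^2) = mu - integral {0..1} (\<lambda>x. p0 x * (y x)^2)"
    using integral_unique[OF H] by simp
  moreover have "0 \<le> integral {0..1} (\<lambda>x. p0 x * (y x)^2)"
    by (rule integral_nonneg[OF i2]) (use p0n in auto)
  ultimately show "integral {0..1} (\<lambda>x. (y' x)^2) \<le> mu" by simp
qed

lemma sq_le_integral_sq_plus_deriv_sq:
  fixes y y' :: "real \<Rightarrow> real"
  assumes yc: "continuous_on {0..1} y" and y0: "y 0 = 0"
    and yd: "\<forall>x\<in>{0<..<1}. (y has_real_derivative y' x) (at x)"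
    and i': "(\<lambda>x. (y' x)^2) integrable_on {0..1}"
    and E: "integral {0..1} (\<lambda>x. (y x)^2) + integral {0..1} (\<lambda>x. (y' x)^2) \<le> C"
    and x: "x \<in> {0..1}"
  shows "(y x)^2 \<le> C"
proof -
  have i3: "(\<lambda>x. (y x)^2) integrable_on {0..1}"
    by (intro integrable_continuous_real continuous_intros yc)
  have iS: "(\<lambda>t. (y t)^2 + (y' t)^2) integrable_on {0..1}" by (rule integrable_add[OF i3 i'])
  have sub: "{0..x} \<subseteq> {0..1}" using x by auto
  have F: "((\<lambda>t. 2 * y t * y' t) has_integral ((y x)^2 - (y 0)^2)) {0..x}"
  proof (rule fundamental_theorem_of_calculus_interior)
    show "0 \<le> x" using x by simp
    show "continuous_on {0..x} (\<lambda>t. (y t)^2)" by (intro continuous_intros continuous_on_subset[OF yc sub])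
    fix t assume t: "t \<in> {0<..<x}"
    then have "t \<in> {0<..<1}" using x by auto
    then have "((\<lambda>t. (y t)^2) has_real_derivative 2 * y t * y' t) (at t)"
      using yd by (auto intro!: derivative_eq_intros)
    then show "((\<lambda>t. (y t)^2) has_vector_derivative 2 * y t * y' t) (at t)"
      by (simp add: has_real_derivative_iff_has_vector_derivative)
  qed
  have "(y x)^2 = integral {0..x} (\<lambda>t. 2 * y t * y' t)" using integral_unique[OF F] y0 by simp
  also have "\<dots> \<le> integral {0..x} (\<lambda>t. (y t)^2 + (y' t)^2)"
  proof (rule integral_le)
    show "(\<lambda>t. 2 * y t * y' t) integrable_on {0..x}" using F by blast
    show "(\<lambda>t. (y t)^2 + (y' t)^2) integrable_on {0..x}" by (rule integrable_on_subinterval[OF iS sub])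
    fix t show "2 * y t * y' t \<le> (y t)^2 + (y' t)^2" using abs_two_mult_le[of "y t" "y' t"] by linarith
  qed
  also have "\<dots> \<le> integral {0..1} (\<lambda>t. (y t)^2 + (y' t)^2)"
    by (rule integral_subset_le[OF sub integrable_on_subinterval[OF iS sub] iS]) auto
  also have "\<dots> = integral {0..1} (\<lambda>x. (y x)^2) + integral {0..1} (\<lambda>x. (y' x)^2)"
    by (rule integral_add[OF i3 i'])
  finally show ?thesis using E by linarith
qed

lemma ground_state_sq_le:
  fixes p0 y y' :: "real \<Rightarrow> real"
  assumes pc: "continuous_on {0..1} p0" and p0n: "\<forall>x\<in>{0..1}. 0 \<le> p0 x"
    and yc: "continuous_on {0..1} y" and y01: "y 0 = 0" "y 1 = 0" and ode: "sl_solution p0 mu y y'"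
    and nrm: "integral {0..1} (\<lambda>x. (y x)^2) = 1" and x: "x \<in> {0..1}"
  shows "(y x)^2 \<le> 1 + mu"
proof -
  obtain K where "\<And>x. x \<in> {0<..<1} \<Longrightarrow> \<bar>y' x\<bar> \<le> K"
    using sl_solution_deriv_bounded[OF pc yc ode] by blast
  then have "\<forall>x\<in>{0<..<1}. \<bar>y' x\<bar> \<le> K" by blast
  note y' = ground_state_deriv_sq_integral[OF pc p0n yc y01 ode this nrm]
  show ?thesis
    by (rule sq_le_integral_sq_plus_deriv_sq[OF yc y01(1) _ y'(1) _ x])
       (use ode y'(2) nrm in \<open>auto simp: sl_solution_def\<close>)
qed

text \<open>Picone's identity: \<open>(\<phi>\<^sup>2 y'/y)' = \<phi>'\<^sup>2 + (p - mu) \<phi>\<^sup>2 - (\<phi>' - \<phi> y'/y)\<^sup>2\<close> for a positive solution \<open>y\<close>.\<close>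

lemma picone_inequality:
  fixes p y y' \<phi> \<phi>' :: "real \<Rightarrow> real"
  assumes ab: "0 < a" "a \<le> b" "b < 1"
    and d\<phi>: "\<And>t. t \<in> {a..b} \<Longrightarrow> (\<phi> has_real_derivative \<phi>' t) (at t within {a..b})"
    and \<phi>'c: "continuous_on {a..b} \<phi>'" and \<phi>0: "\<phi> a = 0" "\<phi> b = 0"
    and pc: "continuous_on {a..b} p"
    and ypos: "\<forall>x\<in>{0<..<1}. 0 < y x" and ode: "sl_solution p mu y y'"
  shows "mu * integral {a..b} (\<lambda>t. (\<phi> t)^2)
           \<le> integral {a..b} (\<lambda>t. (\<phi>' t)^2) + integral {a..b} (\<lambda>t. p t * (\<phi> t)^2)"
proof -
  define I where "I = {a..b}"
  have I: "I \<subseteq> {0<..<1}" using ab by (auto simp: I_def)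
  define h where "h t = (\<phi> t)^2 * (y' t / y t)" for t
  define h' where "h' t = (\<phi> t)^2 * ((((p t - mu) * y t) * y t - y' t * y' t) / (y t * y t))
    + 2 * \<phi> t * \<phi>' t * (y' t / y t)" for t
  define R where "R t = (\<phi>' t - \<phi> t * y' t / y t)^2" for t
  have yne: "\<forall>t\<in>I. y t \<noteq> 0" using ypos I by force
  have dh: "(h has_real_derivative h' t) (at t within I)" if t: "t \<in> I" for t
  proof -
    have t01: "t \<in> {0<..<1}" using t I by auto
    have d1: "((\<lambda>t. (\<phi> t)^2) has_real_derivative 2 * \<phi> t * \<phi>' t) (at t within I)"
      using d\<phi>[OF t[unfolded I_def]] unfolding I_def by (auto intro!: derivative_eq_intros)
    have yd1: "(y has_real_derivative y' t) (at t within I)"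
      and yd2: "(y' has_real_derivative (p t - mu) * y t) (at t within I)"
      using ode t01 unfolding sl_solution_def by (auto simp: has_field_derivative_at_within)
    have d2: "((\<lambda>t. y' t / y t) has_real_derivative
        ((((p t - mu) * y t) * y t - y' t * y' t) / (y t * y t))) (at t within I)"
      by (rule DERIV_divide[OF yd2 yd1]) (use yne t in blast)
    show ?thesis unfolding h_def[abs_def] h'_def by (rule DERIV_mult'[OF d1 d2])
  qed
  have F: "(h' has_integral (h b - h a)) I"
    unfolding I_def
    by (rule fundamental_theorem_of_calculus[OF ab(2)])
       (use dh in \<open>auto simp: I_def has_real_derivative_iff_has_vector_derivative[symmetric]\<close>)
  have \<phi>c: "continuous_on I \<phi>" unfolding I_def by (rule DERIV_continuous_on[OF d\<phi>])
  have yc: "continuous_on I y" "continuous_on I y'" using sl_solution_continuous_on[OF ode I] by auto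
  have Rc: "continuous_on I R" unfolding R_def
    by (intro continuous_intros yc \<phi>c \<phi>'c[folded I_def]) (use yne in auto)
  have Ri: "(R has_integral integral I R) I"
    unfolding I_def by (rule integrable_integral, rule integrable_continuous_real) (use Rc in \<open>simp add: I_def\<close>)
  have R0: "0 \<le> integral I R" by (rule has_integral_nonneg[OF Ri]) (simp add: R_def)
  have "h' t + R t = (\<phi>' t)^2 + p t * (\<phi> t)^2 - mu * (\<phi> t)^2" if t: "t \<in> I" for t
    unfolding h'_def R_def using yne t by (simp add: field_simps power2_eq_square)
  then have G: "((\<lambda>t. (\<phi>' t)^2 + p t * (\<phi> t)^2 - mu * (\<phi> t)^2) has_integral integral I R) I"
    using has_integral_eq[OF _ has_integral_add[OF F Ri]] \<phi>0 by (simp add: h_def)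
  have i: "(\<lambda>t. (\<phi>' t)^2) integrable_on I" "(\<lambda>t. p t * (\<phi> t)^2) integrable_on I"
    "(\<lambda>t. (\<phi> t)^2) integrable_on I"
    unfolding I_def using \<phi>c \<phi>'c pc
    by (auto intro!: integrable_continuous_real continuous_intros simp: I_def)
  have "integral I R = integral I (\<lambda>t. (\<phi>' t)^2) + integral I (\<lambda>t. p t * (\<phi> t)^2)
      - mu * integral I (\<lambda>t. (\<phi> t)^2)"
    using has_integral_unique[OF G has_integral_diff[OF has_integral_add has_integral_mult_right]]
      integrable_integral i by blast
  then show ?thesis using R0 by (simp add: I_def)
qed

lemma integral_bump_sq: "((\<lambda>x. ((x - 1/4) * (3/4 - x))^2) has_integral 1/960) {1/4..3/4::real}"
proof -
  have "((\<lambda>x::real. ((x - 1/4) * (3/4 - x))^2) has_integral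
     (((3/4 - 1/2)^5/5 - (3/4-1/2)^3/24 + (3/4)/256) - ((1/4 - 1/2)^5/5 - (1/4-1/2)^3/24 + (1/4)/256))) {1/4..3/4}"
  proof (rule fundamental_theorem_of_calculus)
    fix x :: real assume "x \<in> {1/4..3/4}"
    have "((\<lambda>x. (x - 1/2)^5/5 - (x-1/2)^3/24 + x/256) has_real_derivative
       (5 * (x - 1/2)^4 / 5 - 3 * (x - 1/2)^2 / 24 + 1/256)) (at x within {1/4..3/4})"
      by (rule derivative_eq_intros refl | simp)+
    moreover have "5 * (x - 1/2)^4 / 5 - 3 * (x - 1/2)^2 / 24 + 1/256 = ((x - 1/4) * (3/4 - x))^2"
      by (simp add: eval_nat_numeral field_simps)
    ultimately show "((\<lambda>x. (x - 1/2)^5/5 - (x-1/2)^3/24 + x/256) has_vector_derivative ((x - 1/4) * (3/4 - x))^2) (at x within {1/4..3/4})"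
      by (simp add: has_real_derivative_iff_has_vector_derivative)
  qed simp
  then show ?thesis by (simp add: eval_nat_numeral)
qed

lemma integral_bump_deriv_sq: "((\<lambda>x. (1 - 2 * x)^2) has_integral 1/24) {1/4..3/4::real}"
proof -
  have "((\<lambda>x::real. (1 - 2 * x)^2) has_integral ((2 * (3/4) - 1)^3/6 - (2 * (1/4) - 1)^3/6)) {1/4..3/4}"
  proof (rule fundamental_theorem_of_calculus)
    fix x :: real assume "x \<in> {1/4..3/4}"
    have "((\<lambda>x. (2 * x - 1)^3/6) has_real_derivative (3 * (2 * x - 1)^2 * 2 / 6)) (at x within {1/4..3/4})"
      by (rule derivative_eq_intros refl | simp)+
    moreover have "3 * (2 * x - 1)^2 * 2 / 6 = (1 - 2 * x)^2" by (simp add: power2_eq_square field_simps)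
    ultimately show "((\<lambda>x. (2 * x - 1)^3/6) has_vector_derivative (1 - 2 * x)^2) (at x within {1/4..3/4})"
      by (simp add: has_real_derivative_iff_has_vector_derivative)
  qed simp
  then show ?thesis by (simp add: eval_nat_numeral)
qed

lemma ground_state_eigenvalue_le:
  fixes p y y' :: "real \<Rightarrow> real"
  assumes pc: "continuous_on {0..1} p" and pn: "\<forall>x\<in>{0..1}. 0 \<le> p x"
    and ypos: "\<forall>x\<in>{0<..<1}. 0 < y x" and ode: "sl_solution p mu y y'"
    and Q: "integral {1/4..3/4} p \<le> Q"
  shows "mu \<le> 960 * (1/24 + Q/256)"
proof -
  define I where "I = {1/4..3/4::real}"
  define \<phi> where "\<phi> x = (x - 1/4) * (3/4 - x)" for x :: real
  have pI: "continuous_on {1/4..3/4} p" by (rule continuous_on_subset[OF pc]) auto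
  have "mu * integral I (\<lambda>t. (\<phi> t)^2) \<le> integral I (\<lambda>t. (1 - 2 * t)^2) + integral I (\<lambda>t. p t * (\<phi> t)^2)"
    unfolding I_def
  proof (rule picone_inequality[OF _ _ _ _ _ _ _ _ ypos ode])
    fix t :: real
    show "(\<phi> has_real_derivative 1 - 2 * t) (at t within {1/4..3/4})"
      unfolding \<phi>_def by (rule derivative_eq_intros refl | simp)+
  qed (use pI in \<open>auto simp: \<phi>_def I_def intro: continuous_intros\<close>)
  moreover have "integral I (\<lambda>t. (\<phi> t)^2) = 1/960"
    unfolding I_def \<phi>_def by (rule integral_unique[OF integral_bump_sq])
  moreover have "integral I (\<lambda>t. (1 - 2 * t)^2) = 1/24"
    unfolding I_def by (rule integral_unique[OF integral_bump_deriv_sq])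
  moreover have "integral I (\<lambda>t. p t * (\<phi> t)^2) \<le> integral I (\<lambda>t. p t * (1/256))"
  proof (rule integral_le)
    show "(\<lambda>t. p t * (\<phi> t)^2) integrable_on I" "(\<lambda>t. p t * (1/256)) integrable_on I"
      unfolding \<phi>_def I_def by (auto intro!: integrable_continuous_real continuous_intros pI)
    fix t assume t: "t \<in> I"
    have "0 \<le> t - 1/4" "0 \<le> 3/4 - t" using t unfolding I_def by auto
    then have f0: "0 \<le> \<phi> t" unfolding \<phi>_def by (rule mult_nonneg_nonneg)
    have "\<phi> t = 1/16 - (t - 1/2)^2" unfolding \<phi>_def by (simp add: power2_eq_square field_simps)
    then have "\<phi> t \<le> 1/16" by simp
    then have "(\<phi> t)^2 \<le> (1/16)^2" using f0 by (rule power_mono)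
    then show "p t * (\<phi> t)^2 \<le> p t * (1/256)"
      using pn t by (intro mult_left_mono) (auto simp: I_def power2_eq_square)
  qed
  moreover have "integral I (\<lambda>t. p t * (1/256)) \<le> Q / 256" using Q by (simp add: I_def)
  ultimately show ?thesis by simp
qed

lemma sine_test_inequality:
  fixes p0 y y' :: "real \<Rightarrow> real"
  assumes pc: "continuous_on {0..1} p0"
    and ynn: "\<forall>x\<in>{0<..<1}. 0 \<le> y x"
    and ode: "sl_solution p0 mu y y'"
    and e0: "0 < \<eta>" and e1: "\<eta> < 1/2"
  shows "(mu - (pi/(1-2*\<eta>))^2) * integral {\<eta>..1-\<eta>} (\<lambda>x. y x * sin (pi/(1-2*\<eta>) * (x - \<eta>)))
     \<le> integral {\<eta>..1-\<eta>} (\<lambda>x. p0 x * y x * sin (pi/(1-2*\<eta>) * (x - \<eta>)))"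
proof -
  note yd = ode[unfolded sl_solution_def]
  define w where "w = pi/(1-2*\<eta>)"
  define J where "J = {\<eta>..1-\<eta>}"
  have J: "J \<subseteq> {0<..<1}" using e0 e1 by (auto simp: J_def)
  have Jle: "\<eta> \<le> 1 - \<eta>" using e1 by simp
  define h where "h t = y' t * sin (w * (t - \<eta>)) - y t * (w * cos (w * (t - \<eta>)))" for t
  define h' where "h' t = (p0 t - mu + w^2) * y t * sin (w * (t - \<eta>))" for t
  have dh: "(h has_real_derivative h' t) (at t within J)" if t: "t \<in> J" for t
  proof -
    have t01: "t \<in> {0<..<1}" using t J by auto
    have yd1: "DERIV y t :> y' t" and yd2: "DERIV y' t :> (p0 t - mu) * y t" using yd t01 by auto
    have "(h has_real_derivative h' t) (at t)"
      unfolding h_def h'_def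
      by (rule derivative_eq_intros yd1 yd2 refl | simp add: algebra_simps power2_eq_square)+
    then show ?thesis by (simp add: has_field_derivative_at_within)
  qed
  have F: "(h' has_integral (h (1-\<eta>) - h \<eta>)) J"
    unfolding J_def by (rule fundamental_theorem_of_calculus[OF Jle])
      (use dh in \<open>auto simp: J_def has_real_derivative_iff_has_vector_derivative[symmetric]\<close>)
  have wpi: "w * (1 - \<eta> - \<eta>) = pi" using e1 by (simp add: w_def field_simps)
  have s1: "sin (w * (1 - \<eta> - \<eta>)) = 0" "cos (w * (1 - \<eta> - \<eta>)) = -1" using wpi by simp_all
  have ha: "h (1-\<eta>) = w * y (1-\<eta>)" unfolding h_def s1 by simp
  have hb: "h \<eta> = - w * y \<eta>" unfolding h_def by simp
  have hend: "h (1-\<eta>) - h \<eta> = w * (y (1-\<eta>) + y \<eta>)" using ha hb by (simp add: algebra_simps)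
  have w0: "0 \<le> w" using e1 by (simp add: w_def)
  have "0 \<le> y (1-\<eta>)" "0 \<le> y \<eta>" using ynn e0 e1 by auto
  then have hnn: "0 \<le> h (1-\<eta>) - h \<eta>" using hend w0 by simp
  have yc: "continuous_on J y" by (rule sl_solution_continuous_on(1)[OF ode J])
  have pcJ: "continuous_on J p0" by (rule continuous_on_subset[OF pc]) (use J in auto)
  have i1: "(\<lambda>x. p0 x * y x * sin (w * (x - \<eta>))) integrable_on J"
    unfolding J_def by (rule integrable_continuous_real) (intro continuous_intros pcJ[unfolded J_def] yc[unfolded J_def])
  have i2: "(\<lambda>x. y x * sin (w * (x - \<eta>))) integrable_on J"
    unfolding J_def by (rule integrable_continuous_real) (intro continuous_intros yc[unfolded J_def])
  have G: "((\<lambda>x. p0 x * y x * sin (w * (x - \<eta>)) - (mu - w^2) * (y x * sin (w * (x - \<eta>)))) has_integral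
      (integral J (\<lambda>x. p0 x * y x * sin (w * (x - \<eta>))) - (mu - w^2) * integral J (\<lambda>x. y x * sin (w * (x - \<eta>))))) J"
    by (intro has_integral_diff integrable_integral i1 has_integral_mult_right i2)
  have eq: "h' x = p0 x * y x * sin (w * (x - \<eta>)) - (mu - w^2) * (y x * sin (w * (x - \<eta>)))" for x
    by (simp add: h'_def algebra_simps)
  have "integral J (\<lambda>x. p0 x * y x * sin (w * (x - \<eta>))) - (mu - w^2) * integral J (\<lambda>x. y x * sin (w * (x - \<eta>)))
      = h (1-\<eta>) - h \<eta>"
    using has_integral_unique[OF G] F unfolding eq by blast
  then show ?thesis using hnn by (simp add: J_def w_def)
qed

lemma sin_le_sin_between:
  fixes a t :: real
  assumes "0 \<le> a" "a \<le> pi/2" "a \<le> t" "t \<le> pi - a"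
  shows "sin a \<le> sin t"
proof (cases "t \<le> pi/2")
  case True
  then show ?thesis using assms by (intro sin_monotone_2pi_le) auto
next
  case False
  have "sin a \<le> sin (pi - t)" using assms False by (intro sin_monotone_2pi_le) auto
  then show ?thesis by simp
qed

lemma integral_sq_middle_ge:
  fixes y :: "real \<Rightarrow> real"
  assumes yc: "continuous_on {0..1} y" and Yb: "\<forall>x\<in>{0..1}. (y x)^2 \<le> Y2" and Y1: "1 \<le> Y2"
    and nrm: "integral {0..1} (\<lambda>x. (y x)^2) = 1"
    and e0: "0 < \<eta>" and e1: "\<eta> \<le> 1/8" and e2: "\<eta> \<le> 1/(8*Y2)"
  shows "1/2 \<le> integral {2*\<eta>..1-2*\<eta>} (\<lambda>x. (y x)^2)"
proof -
  have yc2: "continuous_on {0..1} (\<lambda>x. (y x)^2)" by (intro continuous_intros yc)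
  have iy2: "(\<lambda>x. (y x)^2) integrable_on {a..b}" if "0 \<le> a" "b \<le> 1" for a b
    by (rule integrable_continuous_real, rule continuous_on_subset[OF yc2]) (use that in auto)
  have side: "integral {a..a + 2*\<eta>} (\<lambda>x. (y x)^2) \<le> 2 * \<eta> * Y2" if "0 \<le> a" "a + 2*\<eta> \<le> 1" for a
  proof -
    have "integral {a..a + 2*\<eta>} (\<lambda>x. (y x)^2) \<le> integral {a..a + 2*\<eta>} (\<lambda>x. Y2)"
      by (rule integral_le[OF iy2]) (use that Yb e0 in auto)
    also have "\<dots> = 2 * \<eta> * Y2" using e0 by simp
    finally show ?thesis .
  qed
  have "integral {0..2*\<eta>} (\<lambda>x. (y x)^2) + integral {2*\<eta>..1} (\<lambda>x. (y x)^2) = integral {0..1} (\<lambda>x. (y x)^2)"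
    by (rule Henstock_Kurzweil_Integration.integral_combine) (use iy2[of 0 1] e0 e1 in auto)
  then have c1: "integral {0..2*\<eta>} (\<lambda>x. (y x)^2) + integral {2*\<eta>..1} (\<lambda>x. (y x)^2) = 1"
    using nrm by simp
  have c2: "integral {2*\<eta>..1-2*\<eta>} (\<lambda>x. (y x)^2) + integral {1-2*\<eta>..1} (\<lambda>x. (y x)^2)
      = integral {2*\<eta>..1} (\<lambda>x. (y x)^2)"
    by (rule Henstock_Kurzweil_Integration.integral_combine) (use iy2[of "2*\<eta>" 1] e0 e1 in auto)
  have s1: "integral {0..2*\<eta>} (\<lambda>x. (y x)^2) \<le> 2 * \<eta> * Y2" using side[of 0] e1 by simp
  have s2: "integral {1-2*\<eta>..1} (\<lambda>x. (y x)^2) \<le> 2 * \<eta> * Y2" using side[of "1-2*\<eta>"] e1 by simp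
  have "4 * \<eta> * Y2 \<le> 1/2" using e2 Y1 by (simp add: field_simps)
  then show ?thesis using c1 c2 s1 s2 by linarith
qed

lemma dilated_sine_nonneg:
  assumes e0: "0 < \<eta>" and e1: "\<eta> < 1/2" and x: "x \<in> {\<eta>..1-\<eta>}"
  shows "0 \<le> sin (pi/(1-2*\<eta>) * (x - \<eta>))"
proof (rule sin_ge_zero)
  define w where "w = pi/(1-2*\<eta>)"
  have w0: "0 \<le> w" using e1 by (simp add: w_def)
  show "0 \<le> pi/(1-2*\<eta>) * (x - \<eta>)" using x w0 unfolding w_def by (intro mult_nonneg_nonneg) auto
  have "w * (x - \<eta>) \<le> w * (1 - \<eta> - \<eta>)" using x w0 by (intro mult_left_mono) auto
  also have "\<dots> = pi" using e1 by (simp add: w_def field_simps)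
  finally show "pi/(1-2*\<eta>) * (x - \<eta>) \<le> pi" by (simp add: w_def)
qed

lemma dilated_sine_ge:
  assumes e0: "0 < \<eta>" and e1: "\<eta> \<le> 1/8" and x: "x \<in> {2*\<eta>..1-2*\<eta>}"
  shows "sin (pi*\<eta>) \<le> sin (pi/(1-2*\<eta>) * (x - \<eta>))"
proof -
  define w where "w = pi/(1-2*\<eta>)"
  have w1: "pi \<le> w" using e0 e1 by (simp add: w_def field_simps)
  have w0: "0 \<le> w" using w1 pi_gt_zero by linarith
  have we: "w * \<eta> \<le> pi/2" using e0 e1 by (simp add: w_def field_simps)
  have a1: "0 \<le> pi*\<eta>" using e0 by simp
  have a2: "pi*\<eta> \<le> w*\<eta>" using w1 e0 by (intro mult_right_mono) auto
  have "sin (pi*\<eta>) \<le> sin (w * \<eta>)"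
    by (rule sin_monotone_2pi_le) (use a1 a2 we pi_gt_zero in linarith)+
  also have "\<dots> \<le> sin (w * (x - \<eta>))"
  proof (rule sin_le_sin_between)
    show "0 \<le> w * \<eta>" using e0 w0 by simp
    show "w * \<eta> \<le> pi/2" by (rule we)
    show "w * \<eta> \<le> w * (x - \<eta>)" using x w0 by (intro mult_left_mono) auto
    have "w * (x - \<eta>) \<le> w * (1 - 3 * \<eta>)" using x w0 by (intro mult_left_mono) auto
    also have "\<dots> = pi - w * \<eta>" using e1 by (simp add: w_def field_simps)
    finally show "w * (x - \<eta>) \<le> pi - w * \<eta>" .
  qed
  finally show ?thesis by (simp add: w_def)
qed

lemma sine_test_lower:
  fixes y :: "real \<Rightarrow> real"
  assumes yc: "continuous_on {0..1} y" and ynn: "\<forall>x\<in>{0..1}. 0 \<le> y x"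
    and Yb: "\<forall>x\<in>{0..1}. (y x)^2 \<le> Y2" and Y1: "1 \<le> Y2"
    and nrm: "integral {0..1} (\<lambda>x. (y x)^2) = 1"
    and e0: "0 < \<eta>" and e1: "\<eta> \<le> 1/8" and e2: "\<eta> \<le> 1/(8*Y2)"
  shows "sin (pi*\<eta>)/(2*Y2) \<le> integral {\<eta>..1-\<eta>} (\<lambda>x. y x * sin (pi/(1-2*\<eta>) * (x - \<eta>)))"
proof -
  define w where "w = pi/(1-2*\<eta>)"
  define s0 where "s0 = sin (pi * \<eta>)"
  have psi0: "0 \<le> sin (w * (x - \<eta>))" if "x \<in> {\<eta>..1-\<eta>}" for x
    unfolding w_def by (rule dilated_sine_nonneg[OF e0 _ that]) (use e1 in simp)
  have psis: "s0 \<le> sin (w * (x - \<eta>))" if "x \<in> {2*\<eta>..1-2*\<eta>}" for x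
    unfolding w_def s0_def by (rule dilated_sine_ge[OF e0 e1 that])
  have s0p: "0 \<le> s0" unfolding s0_def using e0 e1 by (intro sin_ge_zero) auto
  have yY: "(y x)^2 \<le> Y2 * y x" if x: "x \<in> {0..1}" for x
  proof -
    have "y x \<le> Y2" using abs_le_if_square_le[OF Yb[rule_format, OF x] Y1] ynn x by auto
    then show ?thesis using ynn x by (simp add: power2_eq_square mult_right_mono)
  qed
  have iy2: "(\<lambda>x. (y x)^2) integrable_on {a..b}" if "0 \<le> a" "b \<le> 1" for a b
    by (rule integrable_continuous_real) (intro continuous_intros continuous_on_subset[OF yc], use that in auto)
  have iyp: "(\<lambda>x. y x * sin (w * (x - \<eta>))) integrable_on {a..b}" if "0 \<le> a" "b \<le> 1" for a b
    by (rule integrable_continuous_real) (intro continuous_intros continuous_on_subset[OF yc], use that in auto)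
  have mid: "1/2 \<le> integral {2*\<eta>..1-2*\<eta>} (\<lambda>x. (y x)^2)"
    by (rule integral_sq_middle_ge[OF yc Yb Y1 nrm e0 e1 e2])
  have "integral {2*\<eta>..1-2*\<eta>} (\<lambda>x. y x * sin (w * (x - \<eta>))) \<le> integral {\<eta>..1-\<eta>} (\<lambda>x. y x * sin (w * (x - \<eta>)))"
  proof (rule integral_subset_le)
    show "{2*\<eta>..1-2*\<eta>} \<subseteq> {\<eta>..1-\<eta>}" using e0 by auto
    show "(\<lambda>x. y x * sin (w * (x - \<eta>))) integrable_on {2*\<eta>..1-2*\<eta>}" by (rule iyp) (use e0 in auto)
    show "(\<lambda>x. y x * sin (w * (x - \<eta>))) integrable_on {\<eta>..1-\<eta>}" by (rule iyp) (use e0 in auto)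
    show "\<forall>x\<in>{\<eta>..1-\<eta>}. 0 \<le> y x * sin (w * (x - \<eta>))"
    proof
      fix x assume x: "x \<in> {\<eta>..1-\<eta>}"
      then show "0 \<le> y x * sin (w * (x - \<eta>))" using psi0[OF x] ynn e0 by (intro mult_nonneg_nonneg) auto
    qed
  qed
  moreover have "integral {2*\<eta>..1-2*\<eta>} (\<lambda>x. (s0 / Y2) * (y x)^2) \<le> integral {2*\<eta>..1-2*\<eta>} (\<lambda>x. y x * sin (w * (x - \<eta>)))"
  proof (rule integral_le)
    show "(\<lambda>x. (s0 / Y2) * (y x)^2) integrable_on {2*\<eta>..1-2*\<eta>}"
      by (rule integrable_on_mult_right, rule iy2) (use e0 in auto)
    show "(\<lambda>x. y x * sin (w * (x - \<eta>))) integrable_on {2*\<eta>..1-2*\<eta>}" by (rule iyp) (use e0 in auto)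
    fix x assume x: "x \<in> {2*\<eta>..1-2*\<eta>}"
    then have x1: "x \<in> {0..1}" using e0 by auto
    have "(s0 / Y2) * (y x)^2 \<le> (s0 / Y2) * (Y2 * y x)"
      by (rule mult_left_mono[OF yY[OF x1]]) (use s0p Y1 in auto)
    also have "\<dots> = s0 * y x" using Y1 by simp
    also have "\<dots> \<le> sin (w * (x - \<eta>)) * y x" by (rule mult_right_mono[OF psis[OF x]]) (use ynn x1 in auto)
    finally show "(s0 / Y2) * (y x)^2 \<le> y x * sin (w * (x - \<eta>))" by (simp add: mult.commute)
  qed
  moreover have "integral {2*\<eta>..1-2*\<eta>} (\<lambda>x. (s0 / Y2) * (y x)^2) = (s0 / Y2) * integral {2*\<eta>..1-2*\<eta>} (\<lambda>x. (y x)^2)"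
    by simp
  moreover have "(s0 / Y2) * (1/2) \<le> (s0 / Y2) * integral {2*\<eta>..1-2*\<eta>} (\<lambda>x. (y x)^2)"
    by (rule mult_left_mono[OF mid]) (use s0p Y1 in auto)
  ultimately show ?thesis unfolding w_def s0_def by (simp add: field_simps)
qed

lemma dilated_frequency_sq_le:
  fixes \<eta> \<delta> :: real
  assumes e0: "0 < \<eta>" and e1: "\<eta> \<le> 1/8" and e2: "\<eta> \<le> \<delta>/(16*pi^2)"
  shows "(pi/(1-2*\<eta>))^2 \<le> pi^2 + \<delta>/2"
proof -
  have tpos: "0 < (1 - 2*\<eta>)^2" using e1 by simp
  have eq: "(1 + 8*\<eta>)*(1-2*\<eta>)^2 = 1 + \<eta>*(4 - 28*\<eta> + 32*\<eta>^2)"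
    by (simp add: power2_eq_square algebra_simps)
  have "0 \<le> \<eta>*(4 - 28*\<eta> + 32*\<eta>^2)" using e0 e1 by (intro mult_nonneg_nonneg) auto
  then have k: "1 \<le> (1 + 8*\<eta>)*(1-2*\<eta>)^2" using eq by simp
  have "(pi/(1-2*\<eta>))^2 = pi^2 / (1-2*\<eta>)^2" by (simp add: power_divide)
  also have "\<dots> \<le> pi^2 * (1 + 8*\<eta>)"
    using k tpos by (simp add: divide_le_eq mult.assoc[symmetric] mult_le_cancel_left1)
  also have "\<dots> = pi^2 + 8 * pi^2 * \<eta>" by (simp add: algebra_simps)
  also have "8 * pi^2 * \<eta> \<le> 8 * pi^2 * (\<delta>/(16*pi^2))" using e2 by (intro mult_left_mono) auto
  also have "8 * pi^2 * (\<delta>/(16*pi^2)) = \<delta>/2" by simp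
  finally show ?thesis by simp
qed

lemma integral_weighted_sq_ge:
  fixes p y \<psi> :: "real \<Rightarrow> real"
  assumes pc: "continuous_on {c..d} p" and yc: "continuous_on {c..d} y" and \<psi>c: "continuous_on {c..d} \<psi>"
    and pn: "\<forall>x\<in>{c..d}. 0 \<le> p x" and \<psi>1: "\<forall>x\<in>{c..d}. \<bar>\<psi> x\<bar> \<le> 1"
    and D: "0 < D" "D \<le> integral {c..d} (\<lambda>x. p x * y x * \<psi> x)"
    and C: "0 < C" "integral {c..d} p \<le> C"
  shows "D^2 / (2 * C) \<le> integral {c..d} (\<lambda>x. p x * (y x)^2)"
proof -
  define s where "s = C / D"
  have s: "0 < s" using C D by (simp add: s_def)
  have iB: "(\<lambda>x. p x * (y x)^2) integrable_on {c..d}"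
    by (intro integrable_continuous_real continuous_intros pc yc)
  have iC: "p integrable_on {c..d}" by (rule integrable_continuous_real[OF pc])
  have "D \<le> integral {c..d} (\<lambda>x. s * (p x * (y x)^2) + (1 / (4 * s)) * p x)"
  proof (rule order.trans[OF D(2) integral_le])
    show "(\<lambda>x. p x * y x * \<psi> x) integrable_on {c..d}"
      by (intro integrable_continuous_real continuous_intros pc yc \<psi>c)
    show "(\<lambda>x. s * (p x * (y x)^2) + (1 / (4 * s)) * p x) integrable_on {c..d}"
      by (intro integrable_add integrable_on_mult_right iB iC)
    fix x assume x: "x \<in> {c..d}"
    have "0 \<le> (2 * s * y x - \<psi> x)^2" by simp
    then have "4 * s * (y x * \<psi> x) \<le> 4 * s * (s * (y x)^2 + (\<psi> x)^2 / (4 * s))"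
      using s by (simp add: power2_eq_square algebra_simps)
    then have "y x * \<psi> x \<le> s * (y x)^2 + (\<psi> x)^2 / (4 * s)" using s by simp
    moreover have "(\<psi> x)^2 / (4 * s) \<le> 1 / (4 * s)"
      by (rule divide_right_mono) (use \<psi>1 x s in \<open>auto simp: abs_square_le_1\<close>)
    ultimately have "p x * (y x * \<psi> x) \<le> p x * (s * (y x)^2 + 1 / (4 * s))"
      by (intro mult_left_mono) (use pn x in auto)
    then show "p x * y x * \<psi> x \<le> s * (p x * (y x)^2) + (1 / (4 * s)) * p x"
      by (simp add: algebra_simps)
  qed
  also have "\<dots> = integral {c..d} (\<lambda>x. s * (p x * (y x)^2)) + integral {c..d} (\<lambda>x. (1 / (4 * s)) * p x)"
    by (rule integral_add) (intro integrable_on_mult_right iB iC)+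
  also have "\<dots> = s * integral {c..d} (\<lambda>x. p x * (y x)^2) + (1 / (4 * s)) * integral {c..d} p"
    by (simp only: integral_mult[OF iB, symmetric] integral_mult[OF iC, symmetric])
  also have "\<dots> \<le> s * integral {c..d} (\<lambda>x. p x * (y x)^2) + (1 / (4 * s)) * C"
    by (rule add_left_mono, rule mult_left_mono) (use C(2) s in auto)
  finally have "D \<le> s * integral {c..d} (\<lambda>x. p x * (y x)^2) + D / 4"
    using C D by (simp add: s_def)
  then have "D * D \<le> (s * integral {c..d} (\<lambda>x. p x * (y x)^2) + D / 4) * D"
    by (rule mult_right_mono) (use D in simp)
  also have "\<dots> = C * integral {c..d} (\<lambda>x. p x * (y x)^2) + D * D / 4"
    using D by (simp add: s_def distrib_right)
  finally have "D * D \<le> C * integral {c..d} (\<lambda>x. p x * (y x)^2) + D * D / 4"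
    (is "_ \<le> C * ?M + _") .
  moreover have "0 \<le> D * D" by simp
  ultimately have "D * D \<le> 2 * (C * ?M)" by linarith
  also have "\<dots> = ?M * (2 * C)" by simp
  finally show ?thesis using C by (simp add: pos_divide_le_eq power2_eq_square)
qed

text \<open>Test the equation against the first Dirichlet eigenfunction of \<open>[\<eta>, 1 - \<eta>]\<close>, whose eigenvalue
  is less than \<open>mu\<close> by at least \<open>\<delta>/2\<close>, and use the resulting lower bound on \<open>\<integral> p y sin\<close>.\<close>

lemma ground_state_potential_mass_ge:
  fixes p y y' :: "real \<Rightarrow> real"
  assumes pc: "continuous_on {0..1} p" and pn: "\<forall>x\<in>{0..1}. 0 \<le> p x"
    and yc: "continuous_on {0..1} y" and y01: "y 0 = 0" "y 1 = 0"
    and ypos: "\<forall>x\<in>{0<..<1}. 0 < y x" and ode: "sl_solution p mu y y'"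
    and nrm: "integral {0..1} (\<lambda>x. (y x)^2) = 1"
    and \<delta>: "0 < \<delta>" "pi^2 + \<delta> \<le> mu"
    and Q: "0 \<le> Q" "integral {1/4..3/4} p \<le> Q"
    and \<eta>: "0 < \<eta>" "\<eta> \<le> 1/8" "\<eta> \<le> \<delta>/(16*pi^2)" "\<eta> \<le> 1/(8*(1 + 960*(1/24 + Q/256)))"
    and C: "0 < C" "integral {\<eta>..1-\<eta>} p \<le> C"
  shows "((\<delta>/2) * (sin (pi*\<eta>)/(2*(1 + 960*(1/24 + Q/256)))))^2 / (2*C)
           \<le> integral {0..1} (\<lambda>x. p x * (y x)^2)"
proof -
  define M where "M = 960*(1/24 + Q/256)"
  define w where "w = pi/(1-2*\<eta>)"
  define A where "A = sin (pi*\<eta>)/(2*(1 + M))"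
  have muM: "mu \<le> M" unfolding M_def by (rule ground_state_eigenvalue_le[OF pc pn ypos ode Q(2)])
  have M0: "0 \<le> M" using Q(1) by (simp add: M_def)
  have ynn: "\<forall>x\<in>{0..1}. 0 \<le> y x"
  proof
    fix x :: real assume "x \<in> {0..1}"
    then consider "x = 0" | "x = 1" | "x \<in> {0<..<1}" by fastforce
    then show "0 \<le> y x" using ypos y01 by cases (auto simp: less_imp_le)
  qed
  have yM: "\<forall>x\<in>{0..1}. (y x)^2 \<le> 1 + M"
  proof
    fix x :: real assume "x \<in> {0..1}"
    from ground_state_sq_le[OF pc pn yc y01 ode nrm this] show "(y x)^2 \<le> 1 + M" using muM by simp
  qed
  have \<eta>M: "\<eta> \<le> 1 / (8 * (1 + M))" using \<eta>(4) by (simp add: M_def)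
  have low: "A \<le> integral {\<eta>..1-\<eta>} (\<lambda>x. y x * sin (w * (x - \<eta>)))"
    unfolding A_def w_def by (rule sine_test_lower[OF yc ynn yM _ nrm \<eta>(1,2) \<eta>M]) (use M0 in simp)
  have A0: "0 < A" unfolding A_def using \<eta> M0 by (intro divide_pos_pos sin_gt_zero) auto
  have "\<delta>/2 \<le> mu - w^2" using dilated_frequency_sq_le[OF \<eta>(1-3)] \<delta>(2) by (simp add: w_def)
  then have "\<delta>/2 * A \<le> (mu - w^2) * integral {\<eta>..1-\<eta>} (\<lambda>x. y x * sin (w * (x - \<eta>)))"
    using low A0 \<delta>(1) by (intro mult_mono) auto
  also have "\<dots> \<le> integral {\<eta>..1-\<eta>} (\<lambda>x. p x * y x * sin (w * (x - \<eta>)))"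
    unfolding w_def by (rule sine_test_inequality[OF pc _ ode \<eta>(1)]) (use ypos \<eta>(2) in \<open>auto simp: less_imp_le\<close>)
  finally have Dle: "\<delta>/2 * A \<le> integral {\<eta>..1-\<eta>} (\<lambda>x. p x * y x * sin (w * (x - \<eta>)))" .
  have J: "{\<eta>..1-\<eta>} \<subseteq> {0..1}" using \<eta>(1,2) by auto
  have "(\<delta>/2 * A)^2 / (2 * C) \<le> integral {\<eta>..1-\<eta>} (\<lambda>x. p x * (y x)^2)"
  proof (rule integral_weighted_sq_ge[where \<psi>="\<lambda>x. sin (w * (x - \<eta>))",
        OF continuous_on_subset[OF pc J] continuous_on_subset[OF yc J] _ _ _ _ Dle C])
    show "continuous_on {\<eta>..1-\<eta>} (\<lambda>x. sin (w * (x - \<eta>)))" by (intro continuous_intros)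
    show "\<forall>x\<in>{\<eta>..1-\<eta>}. 0 \<le> p x" using pn J by blast
    show "\<forall>x\<in>{\<eta>..1-\<eta>}. \<bar>sin (w * (x - \<eta>))\<bar> \<le> 1" by simp
    show "0 < \<delta>/2 * A" using A0 \<delta>(1) by simp
  qed
  also have "\<dots> \<le> integral {0..1} (\<lambda>x. p x * (y x)^2)"
  proof (rule integral_subset_le[OF J])
    have c: "continuous_on {0..1} (\<lambda>x. p x * (y x)^2)" by (intro continuous_intros pc yc)
    show "(\<lambda>x. p x * (y x)^2) integrable_on {0..1}" by (rule integrable_continuous_real[OF c])
    show "(\<lambda>x. p x * (y x)^2) integrable_on {\<eta>..1-\<eta>}"
      by (rule integrable_continuous_real[OF continuous_on_subset[OF c J]])
    show "\<forall>x\<in>{0..1}. 0 \<le> p x * (y x)^2" using pn by simp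
  qed
  finally show ?thesis by (simp add: A_def M_def)
qed

section \<open>Uniform bounds on the potentials\<close>

lemma le_one_plus_powr:
  fixes t \<gamma> :: real
  assumes t: "0 \<le> t" and \<gamma>: "1 < \<gamma>"
  shows "t \<le> 1 + t powr \<gamma>"
proof (cases "t \<le> 1")
  case True
  then show ?thesis by (simp add: add_increasing2)
next
  case False
  then have "t = t powr 1" by simp
  also have "\<dots> \<le> t powr \<gamma>" by (rule powr_mono) (use False \<gamma> in auto)
  finally show ?thesis by simp
qed

lemma in_A_weight_integral_le:
  assumes inA: "in_A r \<gamma> q" and rpos: "\<forall>x\<in>{0<..<1}. 0 < r x" and cd: "0 < c" "c \<le> d" "d < 1"
  shows "(\<lambda>x. r x * q x powr \<gamma>) integrable_on {c..d}"
    and "integral {c..d} (\<lambda>x. r x * q x powr \<gamma>) \<le> 1"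
proof -
  have ri: "(\<lambda>x. r x * q x powr \<gamma>) integrable_on {0..1}"
    and rl: "integral {0..1} (\<lambda>x. r x * q x powr \<gamma>) \<le> 1"
    using inA unfolding in_A_def by auto
  define g where "g x = (if x \<in> {0<..<1} then r x * q x powr \<gamma> else 0)" for x
  have neg: "negligible {0::real, 1}" by auto
  have gsp: "\<And>x. x \<in> {0..1} - {0, 1} \<Longrightarrow> g x = r x * q x powr \<gamma>" by (auto simp: g_def)
  have gi: "g integrable_on {0..1}" by (rule integrable_spike[OF ri neg gsp])
  have gI: "integral {0..1} g = integral {0..1} (\<lambda>x. r x * q x powr \<gamma>)"
    by (rule integral_spike[OF neg]) (use gsp in auto)
  have gnn: "\<forall>x\<in>{0..1}. 0 \<le> g x"
    using rpos by (auto simp: g_def less_imp_le)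
  have sub: "{c..d} \<subseteq> {0..1}" using cd by auto
  have gcd: "\<And>x. x \<in> {c..d} \<Longrightarrow> g x = r x * q x powr \<gamma>" using cd by (auto simp: g_def)
  have gci: "g integrable_on {c..d}" by (rule integrable_on_subinterval[OF gi sub])
  then show "(\<lambda>x. r x * q x powr \<gamma>) integrable_on {c..d}"
    by (rule integrable_eq) (use gcd in auto)
  have "integral {c..d} (\<lambda>x. r x * q x powr \<gamma>) = integral {c..d} g"
    by (rule integral_cong) (use gcd in auto)
  also have "\<dots> \<le> integral {0..1} g" by (rule integral_subset_le[OF sub gci gi gnn])
  finally show "integral {c..d} (\<lambda>x. r x * q x powr \<gamma>) \<le> 1" using gI rl by linarith
qed

lemma in_A_integral_le:
  assumes inA: "in_A r \<gamma> q" and \<gamma>: "1 < \<gamma>" and rpos: "\<forall>x\<in>{0<..<1}. 0 < r x"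
    and cd: "0 < c" "c \<le> d" "d < 1" and m: "0 < m" "\<forall>x\<in>{c..d}. m \<le> r x"
  shows "integral {c..d} q \<le> (d - c) + 1/m"
proof -
  have qi: "q integrable_on {c..d}" and qn: "\<forall>x\<in>{0<..<1}. 0 \<le> q x"
    using inA cd unfolding in_A_def by auto
  note w = in_A_weight_integral_le[OF inA rpos cd]
  have wi: "(\<lambda>x. 1 + 1/m * (r x * q x powr \<gamma>)) integrable_on {c..d}"
    by (intro integrable_add integrable_const_ivl integrable_on_mult_right w(1))
  have "integral {c..d} q \<le> integral {c..d} (\<lambda>x. 1 + 1/m * (r x * q x powr \<gamma>))"
  proof (rule integral_le[OF qi wi])
    fix x assume x: "x \<in> {c..d}"
    then have qx: "0 \<le> q x" using qn cd by auto
    have "m * q x powr \<gamma> \<le> r x * q x powr \<gamma>" by (rule mult_right_mono) (use m x in auto)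
    then have "q x powr \<gamma> \<le> 1/m * (r x * q x powr \<gamma>)" using m by (simp add: le_divide_eq mult.commute)
    then show "q x \<le> 1 + 1/m * (r x * q x powr \<gamma>)" using le_one_plus_powr[OF qx \<gamma>] by linarith
  qed
  also have "\<dots> = integral {c..d} (\<lambda>x. 1) + integral {c..d} (\<lambda>x. 1/m * (r x * q x powr \<gamma>))"
    by (rule integral_add) (intro integrable_const_ivl integrable_on_mult_right w(1))+
  also have "\<dots> = (d - c) + 1/m * integral {c..d} (\<lambda>x. r x * q x powr \<gamma>)"
    using cd by (simp only: integral_mult[OF w(1), symmetric]) simp
  also have "\<dots> \<le> (d - c) + 1/m * 1"
    by (rule add_left_mono, rule mult_left_mono[OF w(2)]) (use m in simp)
  finally show ?thesis by simp
qed

lemma INF_le_if_continuous_on: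
  fixes r :: "real \<Rightarrow> real"
  assumes rc: "continuous_on {c..d} r" and x: "x \<in> {c..d}"
  shows "(INF t\<in>{c..d}. r t) \<le> r x"
proof -
  have "bounded (r ` {c..d})" by (intro compact_imp_bounded compact_continuous_image rc compact_Icc)
  then have "bdd_below (r ` {c..d})" by (rule bounded_imp_bdd_below)
  then show ?thesis using x by (intro cINF_lower) auto
qed

lemma in_A_integral_bound:
  fixes r :: "real \<Rightarrow> real"
  assumes rc: "continuous_on {0<..<1} r"
    and rinf: "\<And>a b. 0 < a \<Longrightarrow> a \<le> b \<Longrightarrow> b < 1 \<Longrightarrow> (INF x\<in>{a..b}. r x) > 0"
    and \<gamma>: "1 < \<gamma>" and cd: "0 < c" "c \<le> d" "d < 1"
  obtains C where "0 < C" "\<And>q. in_A r \<gamma> q \<Longrightarrow> integral {c..d} q \<le> C"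
proof -
  have rpos: "\<forall>x\<in>{0<..<1}. 0 < r x"
  proof
    fix x :: real assume "x \<in> {0<..<1}"
    then have "(INF t\<in>{x..x}. r t) > 0" by (intro rinf) auto
    then show "0 < r x" by simp
  qed
  define m where "m = (INF t\<in>{c..d}. r t)"
  have m: "0 < m" unfolding m_def by (rule rinf[OF cd])
  have rcd: "continuous_on {c..d} r" by (rule continuous_on_subset[OF rc]) (use cd in auto)
  have "\<forall>x\<in>{c..d}. m \<le> r x"
    unfolding m_def using INF_le_if_continuous_on[OF rcd] by blast
  then have "integral {c..d} q \<le> (d - c) + 1/m" if "in_A r \<gamma> q" for q
    by (rule in_A_integral_le[OF that \<gamma> rpos cd m])
  moreover have "0 < (d - c) + 1/m" by (rule add_nonneg_pos) (use cd m in auto)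
  ultimately show ?thesis using that by blast
qed

lemma continuous_on_extension_by_zero:
  fixes q :: "real \<Rightarrow> real"
  assumes qc: "continuous_on {0<..<1} q" and ab: "0 < a" "a \<le> b" "b < 1"
    and qz: "\<forall>x\<in>{0<..<1} - {a..b}. q x = 0"
  shows "continuous_on {0..1} (\<lambda>x. if x \<in> {0<..<1} then q x else 0)"
proof -
  define p0 where "p0 = (\<lambda>x. if x \<in> {0<..<1} then q x else (0::real))"
  define c where "c = (1 + b) / 2"
  have c: "b < c" "c < 1" using ab by (auto simp: c_def)
  have "continuous_on {0..a/2} p0 \<longleftrightarrow> continuous_on {0..a/2} (\<lambda>_. 0::real)"
    by (rule continuous_on_cong) (use qz ab in \<open>auto simp: p0_def\<close>)
  then have c1: "continuous_on {0..a/2} p0" by simp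
  have "continuous_on {c..1} p0 \<longleftrightarrow> continuous_on {c..1} (\<lambda>_. 0::real)"
    by (rule continuous_on_cong) (use qz ab c in \<open>auto simp: p0_def\<close>)
  then have c3: "continuous_on {c..1} p0" by simp
  have "continuous_on {a/2..c} p0 \<longleftrightarrow> continuous_on {a/2..c} q"
    by (rule continuous_on_cong) (use ab c in \<open>auto simp: p0_def\<close>)
  moreover have "continuous_on {a/2..c} q" by (rule continuous_on_subset[OF qc]) (use ab c in auto)
  ultimately have c2: "continuous_on {a/2..c} p0" by simp
  have "continuous_on ({0..a/2} \<union> {a/2..c} \<union> {c..1}) p0"
    by (intro continuous_on_closed_Un c1 c2 c3 closed_Un closed_atLeastAtMost)
  moreover have "{0..a/2} \<union> {a/2..c} \<union> {c..1} = {0..(1::real)}" using ab c by auto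
  ultimately show ?thesis by (simp add: p0_def)
qed

lemma in_B_extension:
  assumes "in_B r \<gamma> \<delta> q"
  obtains p where "continuous_on {0..1} p" "\<forall>x\<in>{0..1}. 0 \<le> p x" "\<forall>x\<in>{0<..<1}. p x = q x"
proof -
  obtain a b where inA: "in_A r \<gamma> q" and qc: "continuous_on {0<..<1} q" and ab: "0 < a" "a \<le> b" "b < 1"
    and qz: "\<forall>x\<in>{0<..<1} - {a..b}. q x = 0"
    using assms unfolding in_B_def by blast
  have qn: "\<forall>x\<in>{0<..<1}. 0 \<le> q x" using inA unfolding in_A_def by blast
  define p where "p x = (if x \<in> {0<..<1} then q x else 0)" for x
  have "continuous_on {0..1} p"
    unfolding p_def[abs_def] by (rule continuous_on_extension_by_zero[OF qc ab qz])
  moreover have "\<forall>x\<in>{0..1}. 0 \<le> p x" using qn by (simp add: p_def)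
  moreover have "\<forall>x\<in>{0<..<1}. p x = q x" by (simp add: p_def)
  ultimately show ?thesis by (rule that)
qed

lemma ground_state_integral_ge:
  fixes r q y :: "real \<Rightarrow> real"
  assumes qB: "in_B r \<gamma> \<delta> q" and ye: "is_eigenfun q (lambda0 q) y"
    and nrm: "integral {0..1} (\<lambda>x. (y x)^2) = 1" and \<delta>: "0 < \<delta>"
    and Q: "0 \<le> Q" "integral {1/4..3/4} q \<le> Q"
    and \<eta>: "0 < \<eta>" "\<eta> \<le> 1/8" "\<eta> \<le> \<delta>/(16*pi^2)" "\<eta> \<le> 1/(8*(1 + 960*(1/24 + Q/256)))"
    and C: "0 < C" "integral {\<eta>..1-\<eta>} q \<le> C"
    and \<kappa>: "\<kappa> = ((\<delta>/2) * (sin (pi*\<eta>)/(2*(1 + 960*(1/24 + Q/256)))))^2 / (2*C)"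
  shows "0 \<le> integral {0..1} (\<lambda>x. (q x - \<kappa>) * (y x)^2)"
proof -
  obtain p where pc: "continuous_on {0..1} p" and pn: "\<forall>x\<in>{0..1}. 0 \<le> p x"
    and pq: "\<forall>x\<in>{0<..<1}. p x = q x"
    using in_B_extension[OF qB] by blast
  have "in_A r \<gamma> q" using qB unfolding in_B_def by blast
  then have qn: "\<forall>x\<in>{0<..<1}. 0 \<le> q x" unfolding in_A_def by blast
  have "\<exists>s. (s = 1 \<or> s = -1) \<and> (\<forall>x\<in>{0<..<1}. 0 < s * y x)"
    by (rule ground_state_sign[OF pc pn pq ye]) (rule lambda0_le[OF qn])
  then obtain s where s: "s = 1 \<or> s = -1" and spos: "\<forall>x\<in>{0<..<1}. 0 < s * y x"
    by blast
  obtain y' where yc: "continuous_on {0..1} y" and y01: "y 0 = 0" "y 1 = 0"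
    and "sl_solution q (lambda0 q) y y'"
    using ye unfolding is_eigenfun_iff by blast
  then have ode: "sl_solution p (lambda0 q) y y'" using sl_solution_cong[OF pq] by simp
  have sq: "(s * y x)^2 = (y x)^2" for x using s by (auto simp: power_mult_distrib)
  have on_01: "integral {a..b} p = integral {a..b} q" if "0 < a" "b < 1" for a b
    by (rule integral_cong) (use pq that in auto)
  have "\<kappa> \<le> integral {0..1} (\<lambda>x. p x * (s * y x)^2)"
    unfolding \<kappa>
  proof (rule ground_state_potential_mass_ge[OF pc pn _ _ _ _ sl_solution_scale[OF ode] _ \<delta> _ Q(1) _ \<eta> C(1)])
    show "continuous_on {0..1} (\<lambda>x. s * y x)" by (intro continuous_intros yc)
    show "integral {0..1} (\<lambda>x. (s * y x)^2) = 1" using nrm by (simp only: sq)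
    show "pi^2 + \<delta> \<le> lambda0 q" using qB by (simp add: in_B_def)
    show "integral {1/4..3/4} p \<le> Q" using on_01[of "1/4" "3/4"] Q(2) by simp
    show "integral {\<eta>..1-\<eta>} p \<le> C" using on_01[of \<eta> "1-\<eta>"] \<eta>(1,2) C(2) by simp
    show "s * y 0 = 0" "s * y 1 = 0" using y01 by simp_all
    show "\<forall>x\<in>{0<..<1}. 0 < s * y x" by (rule spos)
  qed
  also have "\<dots> = integral {0..1} (\<lambda>x. (q x - \<kappa>) * (y x)^2) + \<kappa>"
  proof -
    have i: "(\<lambda>x. p x * (y x)^2) integrable_on {0..1}" "(\<lambda>x. (y x)^2) integrable_on {0..1}"
      by (intro integrable_continuous_real continuous_intros pc yc)+
    have "integral {0..1} (\<lambda>x. (q x - \<kappa>) * (y x)^2) = integral {0..1} (\<lambda>x. p x * (y x)^2 - \<kappa> * (y x)^2)"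
    proof (rule integral_spike[of "{0, 1}"])
      fix x :: real assume "x \<in> {0..1} - {0, 1}"
      then have "x \<in> {0<..<1}" by auto
      then show "p x * (y x)^2 - \<kappa> * (y x)^2 = (q x - \<kappa>) * (y x)^2"
        using pq by (simp add: left_diff_distrib)
    qed simp
    also have "\<dots> = integral {0..1} (\<lambda>x. p x * (y x)^2) - \<kappa>"
      using integral_diff[OF i(1) integrable_on_mult_right[OF i(2)]] nrm by simp
    finally show ?thesis by (simp only: sq)
  qed
  finally show ?thesis by simp
qed

theorem mainTheorem15:
  fixes r :: "real \<Rightarrow> real" and \<gamma> \<delta> :: real
  assumes "continuous_on {0<..<1} r"
    and "\<And>a b. 0 < a \<Longrightarrow> a \<le> b \<Longrightarrow> b < 1 \<Longrightarrow> (INF x\<in>{a..b}. r x) > 0"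
    and "\<gamma> > 1" and "\<delta> > 0"
  shows "\<exists>\<kappa>>0. \<forall>q y. in_B r \<gamma> \<delta> q \<longrightarrow> is_eigenfun q (lambda0 q) y \<longrightarrow>
           integral {0..1} (\<lambda>x. (y x)^2) = 1 \<longrightarrow>
           integral {0..1} (\<lambda>x. (q x - \<kappa>) * (y x)^2) \<ge> 0"
proof -
  obtain Q where Q: "0 < Q" "\<And>q. in_A r \<gamma> q \<Longrightarrow> integral {1/4..3/4} q \<le> Q"
    using in_A_integral_bound[OF assms(1,2,3), of "1/4" "3/4"] by auto
  define \<eta> where "\<eta> = min (1/8) (min (\<delta>/(16*pi^2)) (1/(8*(1 + 960*(1/24 + Q/256)))))"
  have \<eta>: "0 < \<eta>" "\<eta> \<le> 1/8" "\<eta> \<le> \<delta>/(16*pi^2)" "\<eta> \<le> 1/(8*(1 + 960*(1/24 + Q/256)))"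
    using assms(4) Q(1) by (auto simp: \<eta>_def)
  obtain C where C: "0 < C" "\<And>q. in_A r \<gamma> q \<Longrightarrow> integral {\<eta>..1-\<eta>} q \<le> C"
    using in_A_integral_bound[OF assms(1,2,3), of \<eta> "1-\<eta>"] \<eta>(1,2) by auto
  define \<kappa> where "\<kappa> = ((\<delta>/2) * (sin (pi*\<eta>)/(2*(1 + 960*(1/24 + Q/256)))))^2 / (2*C)"
  have "0 < sin (pi*\<eta>)" using \<eta>(1,2) by (intro sin_gt_zero) auto
  then have "0 < \<kappa>" unfolding \<kappa>_def using assms(4) Q(1) C(1) by (intro divide_pos_pos) auto
  moreover have "0 \<le> integral {0..1} (\<lambda>x. (q x - \<kappa>) * (y x)^2)"
    if "in_B r \<gamma> \<delta> q" "is_eigenfun q (lambda0 q) y" "integral {0..1} (\<lambda>x. (y x)^2) = 1" for q y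
  proof -
    have "in_A r \<gamma> q" using that(1) by (simp add: in_B_def)
    from ground_state_integral_ge[OF that assms(4) _ Q(2)[OF this] \<eta> C(1) C(2)[OF this] \<kappa>_def] Q(1)
    show ?thesis by simp
  qed
  ultimately show ?thesis by blast
qed

end
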